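(* Let $\mathcal{F}=(\mu_n,\mathcal{S}_n,L_n,\pi_n)_{n\ge1}$ be a family of irreducible, reversible continuous-time finite Markov chains with $\pi_n(|\mu_n/\pi_n|^2)\to\infty$. The following are equivalent: (1) $\mathcal{F}$ has an $L^2$-cutoff; (2) for all $\epsilon>0$ and $c>0$, $T_{n,2}(\mu_n,\epsilon)\lambda_{n,j_n(c)}\to\infty$; (3) there is $\epsilon>0$ such that $T_{n,2}(\mu_n,\epsilon)\lambda_{n,j_n(c)}\to\infty$ for all $c>0$; (4) for all $c>0$, $\tau_n(c)\lambda_{n,j_n(c)}\to\infty$; (5) for all $\tilde c>0$, $c>0$, $\tau_n(\tilde c)\lambda_{n,j_n(c)}\to\infty$; (6) there is $\tilde c>0$ with $\tau_n(\tilde c)\lambda_{n,j_n(c)}\to\infty$ for all $c>0$. Moreover, if $\mathcal{F}$ has an $L^2$-cutoff, then $\tau_n(c)$ is an $L^2$-cutoff time for every $c>0$, and \[|T_{n,2}(\mu_n,\epsilon)-T_{n,2}(\mu_n,\delta)|=O(1/\lambda_{n,j_n(c)})\ \ \forall\epsilon,\delta,c>0,\qquad |T_{n,2}(\mu_n,\epsilon)-\tau_n(c)|=O\big(\sqrt{\tau_n(c)/\lambda_{n,j_n(c)}}\big)\ \ \forall\epsilon,c>0.\]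
   Context: For the $n$th chain, $H_{n,t}=e^{tL_n}$, $d_{n,2}(\mu_n,t)=\big(\sum_y|\mu_nH_{n,t}(y)/\pi_n(y)-1|^2\pi_n(y)\big)^{1/2}$, $T_{n,2}(\mu_n,\epsilon)=\min\{t\ge0:d_{n,2}(\mu_n,t)\le\epsilon\}$, and $\pi_n(|\mu_n/\pi_n|^2)=\sum_y\mu_n(y)^2/\pi_n(y)$. Let $0=\lambda_{n,0}<\lambda_{n,1}\le\dots\le\lambda_{n,|\mathcal{S}_n|-1}$ be the eigenvalues of $-L_n$ with $L^2(\pi_n)$-orthonormal right eigenvectors $\phi_{n,0}=\mathbf 1,\phi_{n,1},\dots$; $\mu_n(\phi)=\sum_x\mu_n(x)\phi(x)$. For $c>0$: $j_n(c)=\min\{j\ge1:\sum_{i=1}^j|\mu_n(\phi_{n,i})|^2>c\}$ and $\tau_n(c)=\max_{j\ge j_n(c)}\frac{\log(1+\sum_{i=1}^j|\mu_n(\phi_{n,i})|^2)}{2\lambda_{n,j}}$. $L^2$-cutoff: there is $t_n>0$ with $d_{n,2}(\mu_n,(1+a)t_n)\to0$ and $d_{n,2}(\mu_n,(1-a)t_n)\to\infty$ for all $a\in(0,1)$; $t_n$ is then a cutoff time. $a_n=O(b_n)$ means $\sup_na_n/b_n<\infty$. *)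

theory Defs
  imports "HOL-Analysis.Analysis" "HOL-Library.Landau_Symbols"
begin

definition is_generator :: "'a set \<Rightarrow> ('a \<Rightarrow> 'a \<Rightarrow> real) \<Rightarrow> bool" where
  "is_generator S L \<longleftrightarrow>
     (\<forall>x\<in>S. \<forall>y\<in>S. x \<noteq> y \<longrightarrow> 0 \<le> L x y) \<and> (\<forall>x\<in>S. (\<Sum>y\<in>S. L x y) = 0)"

definition irreducible_chain :: "'a set \<Rightarrow> ('a \<Rightarrow> 'a \<Rightarrow> real) \<Rightarrow> bool" where
  "irreducible_chain S L \<longleftrightarrow>
     (\<forall>x\<in>S. \<forall>y\<in>S. (x, y) \<in> {(u, v). u \<in> S \<and> v \<in> S \<and> 0 < L u v}\<^sup>*)"

definition stationary_positive :: "'a set \<Rightarrow> ('a \<Rightarrow> 'a \<Rightarrow> real) \<Rightarrow> ('a \<Rightarrow> real) \<Rightarrow> bool" where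
  "stationary_positive S L pd \<longleftrightarrow>
     (\<forall>x\<in>S. 0 < pd x) \<and> sum pd S = 1 \<and> (\<forall>y\<in>S. (\<Sum>x\<in>S. pd x * L x y) = 0)"

definition reversible_chain :: "'a set \<Rightarrow> ('a \<Rightarrow> 'a \<Rightarrow> real) \<Rightarrow> ('a \<Rightarrow> real) \<Rightarrow> bool" where
  "reversible_chain S L pd \<longleftrightarrow> (\<forall>x\<in>S. \<forall>y\<in>S. pd x * L x y = pd y * L y x)"

definition prob_distr :: "'a set \<Rightarrow> ('a \<Rightarrow> real) \<Rightarrow> bool" where
  "prob_distr S p \<longleftrightarrow> (\<forall>x\<in>S. 0 \<le> p x) \<and> sum p S = 1"

primrec mat_pow :: "'a set \<Rightarrow> ('a \<Rightarrow> 'a \<Rightarrow> real) \<Rightarrow> nat \<Rightarrow> 'a \<Rightarrow> 'a \<Rightarrow> real" where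
  "mat_pow S L 0 x y = (if x = y then 1 else 0)"
| "mat_pow S L (Suc k) x y = (\<Sum>z\<in>S. mat_pow S L k x z * L z y)"

definition heat_kernel :: "'a set \<Rightarrow> ('a \<Rightarrow> 'a \<Rightarrow> real) \<Rightarrow> real \<Rightarrow> 'a \<Rightarrow> 'a \<Rightarrow> real" where
  "heat_kernel S L t x y = (\<Sum>k. t ^ k / fact k * mat_pow S L k x y)"

definition muH :: "'a set \<Rightarrow> ('a \<Rightarrow> 'a \<Rightarrow> real) \<Rightarrow> ('a \<Rightarrow> real) \<Rightarrow> real \<Rightarrow> 'a \<Rightarrow> real" where
  "muH S L mu t y = (\<Sum>x\<in>S. mu x * heat_kernel S L t x y)"

definition d2 :: "'a set \<Rightarrow> ('a \<Rightarrow> 'a \<Rightarrow> real) \<Rightarrow> ('a \<Rightarrow> real) \<Rightarrow> ('a \<Rightarrow> real) \<Rightarrow> real \<Rightarrow> real" where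
  "d2 S L pd mu t = sqrt (\<Sum>y\<in>S. \<bar>muH S L mu t y / pd y - 1\<bar>\<^sup>2 * pd y)"

definition T2 :: "'a set \<Rightarrow> ('a \<Rightarrow> 'a \<Rightarrow> real) \<Rightarrow> ('a \<Rightarrow> real) \<Rightarrow> ('a \<Rightarrow> real) \<Rightarrow> real \<Rightarrow> real" where
  "T2 S L pd mu \<epsilon> = Inf {t. 0 \<le> t \<and> d2 S L pd mu t \<le> \<epsilon>}"

definition chi2 :: "'a set \<Rightarrow> ('a \<Rightarrow> real) \<Rightarrow> ('a \<Rightarrow> real) \<Rightarrow> real" where
  "chi2 S pd mu = (\<Sum>y\<in>S. (mu y)\<^sup>2 / pd y)"

definition spectral_data :: "'a set \<Rightarrow> ('a \<Rightarrow> 'a \<Rightarrow> real) \<Rightarrow> ('a \<Rightarrow> real)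
    \<Rightarrow> (nat \<Rightarrow> real) \<Rightarrow> (nat \<Rightarrow> 'a \<Rightarrow> real) \<Rightarrow> bool" where
  "spectral_data S L pd lam phi \<longleftrightarrow>
     lam 0 = 0 \<and> (\<forall>x\<in>S. phi 0 x = 1) \<and>
     (2 \<le> card S \<longrightarrow> 0 < lam 1) \<and>
     (\<forall>i j. 1 \<le> i \<and> i \<le> j \<and> j < card S \<longrightarrow> lam i \<le> lam j) \<and>
     (\<forall>i < card S. \<forall>x\<in>S. (\<Sum>y\<in>S. L x y * phi i y) = - lam i * phi i x) \<and>
     (\<forall>i < card S. \<forall>k < card S.
        (\<Sum>x\<in>S. phi i x * phi k x * pd x) = (if i = k then 1 else 0))"

definition mu_of :: "'a set \<Rightarrow> ('a \<Rightarrow> real) \<Rightarrow> ('a \<Rightarrow> real) \<Rightarrow> real" where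
  "mu_of S mu f = (\<Sum>x\<in>S. mu x * f x)"

definition psum :: "'a set \<Rightarrow> ('a \<Rightarrow> real) \<Rightarrow> (nat \<Rightarrow> 'a \<Rightarrow> real) \<Rightarrow> nat \<Rightarrow> real" where
  "psum S mu phi j = (\<Sum>i = 1..j. \<bar>mu_of S mu (phi i)\<bar>\<^sup>2)"

definition jfun :: "'a set \<Rightarrow> ('a \<Rightarrow> real) \<Rightarrow> (nat \<Rightarrow> 'a \<Rightarrow> real) \<Rightarrow> real \<Rightarrow> nat" where
  "jfun S mu phi c = (LEAST j. 1 \<le> j \<and> j < card S \<and> c < psum S mu phi j)"

definition taufun :: "'a set \<Rightarrow> ('a \<Rightarrow> real) \<Rightarrow> (nat \<Rightarrow> real) \<Rightarrow> (nat \<Rightarrow> 'a \<Rightarrow> real) \<Rightarrow> real \<Rightarrow> real" where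
  "taufun S mu lam phi c =
     Max ((\<lambda>j. ln (1 + psum S mu phi j) / (2 * lam j)) ` {jfun S mu phi c ..< card S})"

definition L2_cutoff_time :: "(nat \<Rightarrow> 'a set) \<Rightarrow> (nat \<Rightarrow> 'a \<Rightarrow> 'a \<Rightarrow> real) \<Rightarrow> (nat \<Rightarrow> 'a \<Rightarrow> real)
    \<Rightarrow> (nat \<Rightarrow> 'a \<Rightarrow> real) \<Rightarrow> (nat \<Rightarrow> real) \<Rightarrow> bool" where
  "L2_cutoff_time S L pd mu t \<longleftrightarrow>
     (\<forall>\<^sub>F n in sequentially. 0 < t n) \<and>
     (\<forall>a. 0 < a \<and> a < 1 \<longrightarrow>
        ((\<lambda>n. d2 (S n) (L n) (pd n) (mu n) ((1 + a) * t n)) \<longlonglongrightarrow> 0) \<and>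
        filterlim (\<lambda>n. d2 (S n) (L n) (pd n) (mu n) ((1 - a) * t n)) at_top sequentially)"

definition has_L2_cutoff :: "(nat \<Rightarrow> 'a set) \<Rightarrow> (nat \<Rightarrow> 'a \<Rightarrow> 'a \<Rightarrow> real) \<Rightarrow> (nat \<Rightarrow> 'a \<Rightarrow> real)
    \<Rightarrow> (nat \<Rightarrow> 'a \<Rightarrow> real) \<Rightarrow> bool" where
  "has_L2_cutoff S L pd mu \<longleftrightarrow> (\<exists>t. L2_cutoff_time S L pd mu t)"

end

theory Submission
  imports Defs "Jordan_Normal_Form.Determinant"
begin

text \<open>By reversibility the heat kernel diagonalises in the orthonormal eigenbasis, so that
  d2(t)^2 = sum_{i >= 1} a_i exp(-2 lam_i t) with weights a_i = |mu(phi_i)|^2 of total mass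
  chi2 - 1, which tends to infinity; everything else is about such exponential sums.
  The maximum defining tau(c) is attained at some j >= j(c) with
  1 + a_1 + ... + a_j = exp(2 lam_j tau(c)), whence d2(t)^2 >= exp(2 lam_j(c) (tau(c) - t)) - 1
  before tau(c). After tau(c) the indices below j(c) carry weight at most c, and Abel summation
  against 1 + a_1 + ... + a_k <= exp(2 lam_k tau(c)) bounds the remaining tail at time
  tau(c) + s by (2 + tau(c)/s) exp(-2 lam_j(c) s). So tau(c) lam_j(c) -> infinity gives a cutoff
  at tau(c) with window sqrt(tau(c)/lam_j(c)); conversely every cutoff time t_n satisfies
  t_n lam_j(c) -> infinity, because d2(t)^2 >= c exp(-2 lam_j(c) t).\<close>

lemma orthonormal_rows_imp_orthonormal_columns:
  fixes v :: "nat \<Rightarrow> nat \<Rightarrow> real"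
  assumes rows: "\<And>i k. i < n \<Longrightarrow> k < n \<Longrightarrow> (\<Sum>j<n. v i j * v k j) = (if i = k then 1 else 0)"
    and "j < n" "l < n"
  shows "(\<Sum>i<n. v i j * v i l) = (if j = l then 1 else 0)"
proof -
  define V :: "real mat" where "V = mat n n (\<lambda>(i, j). v i j)"
  have V: "V \<in> carrier_mat n n" and VT: "transpose_mat V \<in> carrier_mat n n"
    by (simp_all add: V_def)
  have "V * transpose_mat V = 1\<^sub>m n"
    using rows by (intro eq_matI) (auto simp: V_def scalar_prod_def atLeast0LessThan)
  then have "transpose_mat V * V = 1\<^sub>m n"
    using mat_mult_left_right_inverse[OF V VT] by blast
  then have "(transpose_mat V * V) $$ (j, l) = 1\<^sub>m n $$ (j, l)" by simp
  then show ?thesis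
    using assms(2,3) by (simp add: V_def scalar_prod_def atLeast0LessThan)
qed

lemma orthonormal_family_complete:
  fixes phi :: "nat \<Rightarrow> 'a \<Rightarrow> real"
  assumes "finite S" and pos: "\<And>x. x \<in> S \<Longrightarrow> 0 < pd x"
    and orth: "\<And>i k. i < card S \<Longrightarrow> k < card S \<Longrightarrow>
                 (\<Sum>x\<in>S. phi i x * phi k x * pd x) = (if i = k then 1 else 0)"
    and x: "x \<in> S" and y: "y \<in> S"
  shows "(\<Sum>i<card S. phi i x * phi i y) * pd y = (if x = y then 1 else 0)"
proof -
  obtain e where e: "bij_betw e {..<card S} S"
    using ex_bij_betw_nat_finite[OF \<open>finite S\<close>] by (auto simp: atLeast0LessThan)
  define v where "v i j = phi i (e j) * sqrt (pd (e j))" for i j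
  have pd_e: "0 < pd (e j)" if "j < card S" for j
    using e pos that unfolding bij_betw_def by auto
  have rows: "(\<Sum>j<card S. v i j * v k j) = (if i = k then 1 else 0)"
    if "i < card S" "k < card S" for i k
  proof -
    have "(\<Sum>j<card S. v i j * v k j) = (\<Sum>j<card S. phi i (e j) * phi k (e j) * pd (e j))"
      using pd_e by (intro sum.cong) (auto simp: v_def less_imp_le)
    also have "\<dots> = (\<Sum>x\<in>S. phi i x * phi k x * pd x)"
      by (rule sum.reindex_bij_betw[OF e])
    finally show ?thesis using orth that by simp
  qed
  obtain j l where j: "j < card S" "e j = x" and l: "l < card S" "e l = y"
    using e x y unfolding bij_betw_def by (metis imageE lessThan_iff)
  have "(\<Sum>i<card S. v i j * v i l) = (if j = l then 1 else 0)"
    using orthonormal_rows_imp_orthonormal_columns[OF rows j(1) l(1)] .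
  moreover have "(\<Sum>i<card S. v i j * v i l) = (\<Sum>i<card S. phi i x * phi i y) * (sqrt (pd x) * sqrt (pd y))"
    unfolding v_def j l sum_distrib_right by (simp add: mult_ac)
  moreover have "j = l \<longleftrightarrow> x = y"
    using e j l unfolding bij_betw_def inj_on_def by auto
  ultimately show ?thesis
    using pos[OF x] pos[OF y] by (auto simp: real_sqrt_mult[symmetric] split: if_splits)
qed

locale spectral_chain =
  fixes S :: "'a set" and L :: "'a \<Rightarrow> 'a \<Rightarrow> real" and pd mu :: "'a \<Rightarrow> real"
    and lam :: "nat \<Rightarrow> real" and phi :: "nat \<Rightarrow> 'a \<Rightarrow> real"
  assumes finite_S: "finite S"
    and stationary: "stationary_positive S L pd"
    and reversible: "reversible_chain S L pd"
    and initial: "prob_distr S mu"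
    and spectral: "spectral_data S L pd lam phi"
begin

lemma pd_pos: "x \<in> S \<Longrightarrow> 0 < pd x"
  using stationary unfolding stationary_positive_def by auto

lemma orthonormal:
  "i < card S \<Longrightarrow> k < card S \<Longrightarrow> (\<Sum>x\<in>S. phi i x * phi k x * pd x) = (if i = k then 1 else 0)"
  using spectral unfolding spectral_data_def by auto

lemma eigenvector: "i < card S \<Longrightarrow> x \<in> S \<Longrightarrow> (\<Sum>y\<in>S. L x y * phi i y) = - lam i * phi i x"
  using spectral unfolding spectral_data_def by auto

lemma left_eigenvector:
  assumes "i < card S" "y \<in> S"
  shows "(\<Sum>z\<in>S. phi i z * pd z * L z y) = - lam i * phi i y * pd y"
proof -
  have "(\<Sum>z\<in>S. phi i z * pd z * L z y) = pd y * (\<Sum>z\<in>S. L y z * phi i z)"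
    using reversible assms(2) unfolding reversible_chain_def sum_distrib_left
    by (intro sum.cong) (auto simp: mult_ac)
  then show ?thesis using eigenvector[OF assms] by simp
qed

lemma mat_pow_spectral:
  assumes "x \<in> S" "y \<in> S"
  shows "mat_pow S L k x y = (\<Sum>i<card S. (- lam i) ^ k * (phi i x * phi i y * pd y))"
  using assms(2)
proof (induction k arbitrary: y)
  case 0
  then show ?case
    using orthonormal_family_complete[OF finite_S pd_pos orthonormal assms(1)]
    by (simp add: sum_distrib_right)
next
  case (Suc k)
  have "mat_pow S L (Suc k) x y
      = (\<Sum>z\<in>S. (\<Sum>i<card S. (- lam i) ^ k * (phi i x * phi i z * pd z)) * L z y)"
    using Suc.IH by simp
  also have "\<dots> = (\<Sum>i<card S. (- lam i) ^ k * phi i x * (\<Sum>z\<in>S. phi i z * pd z * L z y))"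
    by (simp add: sum_distrib_right sum_distrib_left mult_ac sum.swap[of _ S])
  also have "\<dots> = (\<Sum>i<card S. (- lam i) ^ Suc k * (phi i x * phi i y * pd y))"
    using left_eigenvector Suc.prems by (intro sum.cong) auto
  finally show ?case .
qed

lemma heat_kernel_spectral:
  assumes "x \<in> S" "y \<in> S"
  shows "heat_kernel S L t x y = (\<Sum>i<card S. exp (- lam i * t) * (phi i x * phi i y * pd y))"
proof -
  have "(\<lambda>k. t ^ k / fact k * mat_pow S L k x y)
      = (\<lambda>k. \<Sum>i<card S. (- lam i * t) ^ k / fact k * (phi i x * phi i y * pd y))"
    unfolding mat_pow_spectral[OF assms] sum_distrib_left power_mult_distrib
    by (intro ext sum.cong) auto
  moreover have "(\<lambda>k. \<Sum>i<card S. (- lam i * t) ^ k / fact k * (phi i x * phi i y * pd y))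
      sums (\<Sum>i<card S. exp (- lam i * t) * (phi i x * phi i y * pd y))"
  proof (intro sums_sum sums_mult2)
    fix i
    show "(\<lambda>k. (- lam i * t) ^ k / fact k) sums exp (- lam i * t)"
      using exp_converges[of "- lam i * t"] by (simp add: divide_inverse_commute)
  qed
  ultimately show ?thesis
    unfolding heat_kernel_def by (simp add: sums_iff)
qed

lemma muH_spectral:
  assumes "y \<in> S"
  shows "muH S L mu t y = pd y * (\<Sum>i<card S. exp (- lam i * t) * mu_of S mu (phi i) * phi i y)"
proof -
  have "muH S L mu t y
      = (\<Sum>x\<in>S. mu x * (\<Sum>i<card S. exp (- lam i * t) * (phi i x * phi i y * pd y)))"
    unfolding muH_def using heat_kernel_spectral assms by (intro sum.cong) auto
  then show ?thesis
    unfolding mu_of_def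
    by (simp add: sum_distrib_left sum_distrib_right mult_ac sum.swap[of _ S])
qed

lemma muH_density_minus_one:
  assumes y: "y \<in> S"
  shows "muH S L mu t y / pd y - 1
       = (\<Sum>i\<in>{1..<card S}. exp (- lam i * t) * mu_of S mu (phi i) * phi i y)"
proof -
  have "{..<card S} = insert 0 {1..<card S}"
    using finite_S y by (auto simp: card_gt_0_iff)
  moreover have "mu_of S mu (phi 0) = 1" "phi 0 y = 1" "lam 0 = 0"
    using initial spectral y unfolding mu_of_def prob_distr_def spectral_data_def by simp_all
  ultimately show ?thesis
    using muH_spectral[OF y] pd_pos[OF y] by simp
qed

lemma L2_distance_spectral:
  "(\<Sum>y\<in>S. \<bar>muH S L mu t y / pd y - 1\<bar>\<^sup>2 * pd y)
       = (\<Sum>i\<in>{1..<card S}. \<bar>mu_of S mu (phi i)\<bar>\<^sup>2 * exp (- 2 * lam i * t))"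
proof -
  define I where "I = {1..<card S}"
  define c where "c i = exp (- lam i * t) * mu_of S mu (phi i)" for i
  have "(\<Sum>y\<in>S. \<bar>muH S L mu t y / pd y - 1\<bar>\<^sup>2 * pd y)
      = (\<Sum>y\<in>S. (\<Sum>i\<in>I. c i * phi i y) * (\<Sum>k\<in>I. c k * phi k y) * pd y)"
    using muH_density_minus_one
    by (intro sum.cong) (auto simp: I_def c_def power2_eq_square)
  also have "\<dots> = (\<Sum>i\<in>I. \<Sum>k\<in>I. c i * c k * (\<Sum>y\<in>S. phi i y * phi k y * pd y))"
    by (simp add: sum_product sum_distrib_left sum_distrib_right mult_ac sum.swap[of _ S])
  also have "\<dots> = (\<Sum>i\<in>I. \<Sum>k\<in>I. c i * c k * (if i = k then 1 else 0))"
    using orthonormal by (intro sum.cong) (auto simp: I_def)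
  also have "\<dots> = (\<Sum>i\<in>I. c i * c i)"
    by (simp add: I_def if_distrib cong: if_cong)
  also have "\<dots> = (\<Sum>i\<in>I. \<bar>mu_of S mu (phi i)\<bar>\<^sup>2 * exp (- 2 * lam i * t))"
    by (intro sum.cong refl) (simp add: c_def power2_eq_square exp_add[symmetric])
  finally show ?thesis unfolding I_def .
qed

lemma d2_spectral:
  "d2 S L pd mu t = sqrt (\<Sum>i\<in>{1..<card S}. \<bar>mu_of S mu (phi i)\<bar>\<^sup>2 * exp (- 2 * lam i * t))"
  unfolding d2_def L2_distance_spectral ..

lemma muH_zero:
  assumes y: "y \<in> S"
  shows "muH S L mu 0 y = mu y"
proof -
  have "muH S L mu 0 y = (\<Sum>x\<in>S. mu x * ((\<Sum>i<card S. phi i x * phi i y) * pd y))"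
    unfolding muH_def using heat_kernel_spectral y
    by (intro sum.cong) (simp_all add: sum_distrib_right)
  also have "\<dots> = (\<Sum>x\<in>S. mu x * (if x = y then 1 else 0))"
    using orthonormal_family_complete[OF finite_S pd_pos orthonormal _ y] by (intro sum.cong) auto
  finally show ?thesis using finite_S y by (simp add: if_distrib cong: if_cong)
qed

lemma chi2_spectral: "chi2 S pd mu = 1 + (\<Sum>i\<in>{1..<card S}. \<bar>mu_of S mu (phi i)\<bar>\<^sup>2)"
proof -
  have "(\<Sum>i\<in>{1..<card S}. \<bar>mu_of S mu (phi i)\<bar>\<^sup>2) = (\<Sum>y\<in>S. (mu y / pd y - 1)\<^sup>2 * pd y)"
    using L2_distance_spectral[of 0] muH_zero by simp
  also have "\<dots> = (\<Sum>y\<in>S. (mu y)\<^sup>2 / pd y - 2 * mu y + pd y)"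
  proof (rule sum.cong)
    fix y assume "y \<in> S"
    with pd_pos have "pd y \<noteq> 0" by force
    then show "(mu y / pd y - 1)\<^sup>2 * pd y = (mu y)\<^sup>2 / pd y - 2 * mu y + pd y"
      by (simp add: power2_eq_square field_simps)
  qed simp
  also have "\<dots> = chi2 S pd mu - 1"
    using initial stationary unfolding chi2_def prob_distr_def stationary_positive_def
    by (simp add: sum.distrib sum_subtractf sum_distrib_left[symmetric])
  finally show ?thesis by simp
qed

end

lemma concave_one_minus_exp:
  fixes \<theta> x :: real
  assumes "0 \<le> \<theta>" "\<theta> \<le> 1" "0 \<le> x"
  shows "\<theta> * (1 - exp (- x)) \<le> 1 - exp (- (\<theta> * x))"
  using convex_onD[OF exp_convex, of \<theta> 0 "- x"] assms by (simp add: algebra_simps)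

lemma exp_gap_rescale_le:
  fixes p q u t :: real
  assumes u: "0 < u" "u \<le> t" and pq: "p \<le> q"
  shows "exp (2 * p * (t - u)) * (exp (- 2 * p * t) - exp (- 2 * q * t))
         \<le> t / u * (exp (- 2 * p * u) - exp (- 2 * q * u))"
proof -
  define d where "d = q - p"
  have lhs: "exp (2 * p * (t - u)) * (exp (- 2 * p * t) - exp (- 2 * q * t))
           = exp (- 2 * p * u) * (1 - exp (- (2 * d * t)))"
    unfolding d_def right_diff_distrib exp_add[symmetric] by (simp add: algebra_simps)
  have rhs: "exp (- 2 * p * u) - exp (- 2 * q * u) = exp (- 2 * p * u) * (1 - exp (- (2 * d * u)))"
    unfolding d_def right_diff_distrib exp_add[symmetric] by (simp add: algebra_simps)
  have "0 \<le> 2 * d * t"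
    using u pq by (simp add: d_def)
  then have "u / t * (1 - exp (- (2 * d * t))) \<le> 1 - exp (- (u / t * (2 * d * t)))"
    using u by (intro concave_one_minus_exp) auto
  also have "u / t * (2 * d * t) = 2 * d * u"
    using u by simp
  finally have "u / t * (1 - exp (- (2 * d * t))) \<le> 1 - exp (- (2 * d * u))" .
  then have "1 - exp (- (2 * d * t)) \<le> t / u * (1 - exp (- (2 * d * u)))"
    using u by (simp add: field_simps)
  then have "exp (- 2 * p * u) * (1 - exp (- (2 * d * t)))
           \<le> exp (- 2 * p * u) * (t / u * (1 - exp (- (2 * d * u))))"
    by (rule mult_left_mono) simp
  then show ?thesis
    unfolding lhs rhs by (simp add: mult.left_commute)
qed

lemma exists_exp_decay_le:
  fixes B r :: real
  assumes "0 \<le> B" "0 < r"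
  shows "\<exists>M\<ge>1. B * exp (- 2 * M) \<le> r"
proof -
  define M where "M = max 1 (B / r)"
  have M: "1 \<le> M" "B / r \<le> M" unfolding M_def by auto
  have "M \<le> exp (2 * M)" using exp_ge_add_one_self[of "2 * M"] M by linarith
  then have "B * exp (- 2 * M) \<le> B / M"
    using assms M by (simp add: exp_minus field_simps mult_left_mono)
  also have "\<dots> \<le> r" using M assms by (simp add: field_simps)
  finally show ?thesis using M by blast
qed

lemma linear_times_exp_decay_le:
  fixes x M :: real
  assumes "1 \<le> x" "1 \<le> M"
  shows "(2 + x / M) * exp (- 2 * M * x) \<le> 3 * exp 1 * exp (- 2 * M)"
proof -
  have "x / M \<le> x"
    using assms by (simp add: divide_le_eq mult_le_cancel_left1)
  then have "2 + x / M \<le> 3 * exp (x - 1)"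
    using exp_ge_add_one_self[of "x - 1"] assms by linarith
  then have "(2 + x / M) * exp (- 2 * M * x) \<le> 3 * exp (x - 1) * exp (- 2 * M * x)"
    by (simp add: mult_right_mono)
  also have "\<dots> = 3 * exp (x - 1 - 2 * M * x)"
    by (simp add: exp_add[symmetric])
  also have "\<dots> \<le> 3 * exp (1 + - 2 * M)"
    using mult_right_mono[of 1 x "2 * M - 1"] assms by (simp add: algebra_simps)
  finally show ?thesis by (simp only: exp_add mult.assoc)
qed

lemma sqrt_mult_divide:
  fixes u l :: real
  assumes "0 < u" "0 < l"
  shows "sqrt (u * l) / l = sqrt (u / l)"
proof -
  have "u / l = (u * l) / l\<^sup>2" using assms by (simp add: power2_eq_square)
  then show ?thesis using assms by (simp add: real_sqrt_divide)
qed

text \<open>The spectral profile of one chain: weights \<open>a i\<close> (later \<open>|mu(phi i)|^2\<close>) on the indices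
  \<open>1 ..< N\<close>, with positive nondecreasing eigenvalues.\<close>

locale spectral_profile =
  fixes N :: nat and a lam :: "nat \<Rightarrow> real"
  assumes weight_nonneg: "0 \<le> a i"
    and eigenvalue_pos: "1 \<le> i \<Longrightarrow> i < N \<Longrightarrow> 0 < lam i"
    and eigenvalue_mono: "1 \<le> i \<Longrightarrow> i \<le> j \<Longrightarrow> j < N \<Longrightarrow> lam i \<le> lam j"
begin

definition mass :: "nat \<Rightarrow> real" where
  "mass j = (\<Sum>i = 1..j. a i)"

definition partial_dist_sq :: "nat \<Rightarrow> nat \<Rightarrow> real \<Rightarrow> real" where
  "partial_dist_sq k m t = (\<Sum>i\<in>{k..<m}. a i * exp (- 2 * lam i * t))"

abbreviation dist_sq :: "real \<Rightarrow> real" where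
  "dist_sq \<equiv> partial_dist_sq 1 N"

definition mixing_time :: "real \<Rightarrow> real" where
  "mixing_time \<epsilon> = Inf {t. 0 \<le> t \<and> sqrt (dist_sq t) \<le> \<epsilon>}"

definition cutoff_index :: "real \<Rightarrow> nat" where
  "cutoff_index c = (LEAST j. 1 \<le> j \<and> j < N \<and> c < mass j)"

definition tau_at :: "nat \<Rightarrow> real" where
  "tau_at j = ln (1 + mass j) / (2 * lam j)"

definition tau :: "real \<Rightarrow> real" where
  "tau c = Max (tau_at ` {cutoff_index c ..< N})"

lemma mass_nonneg: "0 \<le> mass j"
  unfolding mass_def by (simp add: sum_nonneg weight_nonneg)

lemma mass_Suc: "mass (Suc j) = mass j + a (Suc j)"
  unfolding mass_def by simp

lemma exp_eigenvalue_antimono: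
  "1 \<le> i \<Longrightarrow> i \<le> j \<Longrightarrow> j < N \<Longrightarrow> 0 \<le> t \<Longrightarrow> exp (- 2 * lam j * t) \<le> exp (- 2 * lam i * t)"
  using eigenvalue_mono[of i j] by (simp add: mult_right_mono)

lemma partial_dist_sq_nonneg: "0 \<le> partial_dist_sq k m t"
  unfolding partial_dist_sq_def by (simp add: sum_nonneg weight_nonneg)

lemma partial_dist_sq_split:
  "k \<le> l \<Longrightarrow> l \<le> m \<Longrightarrow> partial_dist_sq k m t = partial_dist_sq k l t + partial_dist_sq l m t"
  unfolding partial_dist_sq_def by (simp add: sum.atLeastLessThan_concat)

lemma partial_dist_sq_le_mass:
  assumes "1 \<le> k" "k \<le> m" "m \<le> N" "0 \<le> t"
  shows "partial_dist_sq k m t \<le> mass (m - 1) * exp (- 2 * lam k * t)"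
proof -
  have "partial_dist_sq k m t \<le> (\<Sum>i\<in>{k..<m}. a i * exp (- 2 * lam k * t))"
    unfolding partial_dist_sq_def using assms
    by (intro sum_mono mult_left_mono exp_eigenvalue_antimono weight_nonneg) auto
  also have "\<dots> = (\<Sum>i\<in>{k..<m}. a i) * exp (- 2 * lam k * t)"
    by (simp add: sum_distrib_right)
  also have "\<dots> \<le> mass (m - 1) * exp (- 2 * lam k * t)"
    unfolding mass_def using assms by (intro mult_right_mono sum_mono2 weight_nonneg) auto
  finally show ?thesis .
qed

lemma partial_dist_sq_head_le:
  assumes "1 \<le> k" "k \<le> N" "0 \<le> t"
  shows "partial_dist_sq 1 k t \<le> mass (k - 1)"
proof -
  have "exp (- 2 * lam i * t) \<le> 1" if "i \<in> {1..<k}" for i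
    using eigenvalue_pos[of i] that assms by simp
  then have "partial_dist_sq 1 k t \<le> (\<Sum>i\<in>{1..<k}. a i)"
    unfolding partial_dist_sq_def by (intro sum_mono mult_left_le weight_nonneg)
  also have "\<dots> = mass (k - 1)"
    unfolding mass_def using assms(1) by (intro sum.cong) auto
  finally show ?thesis .
qed

lemma partial_dist_sq_shift:
  assumes "1 \<le> k" "m \<le> N" "0 \<le> s"
  shows "partial_dist_sq k m (t + s) \<le> exp (- 2 * lam k * s) * partial_dist_sq k m t"
  unfolding partial_dist_sq_def sum_distrib_left
proof (rule sum_mono)
  fix i assume "i \<in> {k..<m}"
  then have "a i * exp (- 2 * lam i * t) * exp (- 2 * lam i * s)
          \<le> a i * exp (- 2 * lam i * t) * exp (- 2 * lam k * s)"
    using assms by (intro mult_left_mono exp_eigenvalue_antimono) (auto simp: weight_nonneg)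
  moreover have "exp (- 2 * lam i * (t + s)) = exp (- 2 * lam i * t) * exp (- 2 * lam i * s)"
    by (simp only: distrib_left exp_add)
  ultimately show "a i * exp (- 2 * lam i * (t + s)) \<le> exp (- 2 * lam k * s) * (a i * exp (- 2 * lam i * t))"
    by (simp add: mult_ac)
qed

lemma dist_sq_antimono: "s \<le> t \<Longrightarrow> dist_sq t \<le> dist_sq s"
  unfolding partial_dist_sq_def using eigenvalue_pos
  by (intro sum_mono mult_left_mono weight_nonneg) auto

lemma mass_exp_le_dist_sq:
  assumes "1 \<le> j" "j < N" "0 \<le> t"
  shows "mass j * exp (- 2 * lam j * t) \<le> dist_sq t"
proof -
  have "mass j * exp (- 2 * lam j * t) \<le> (\<Sum>i = 1..j. a i * exp (- 2 * lam i * t))"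
    unfolding mass_def sum_distrib_right using assms
    by (intro sum_mono mult_left_mono exp_eigenvalue_antimono weight_nonneg) auto
  also have "\<dots> = partial_dist_sq 1 (Suc j) t"
    unfolding partial_dist_sq_def atLeastLessThanSuc_atLeastAtMost ..
  also have "\<dots> \<le> dist_sq t"
    using partial_dist_sq_split[of 1 "Suc j" N t] partial_dist_sq_nonneg assms by simp
  finally show ?thesis .
qed

lemma exists_dist_sq_le:
  assumes "0 < \<epsilon>"
  shows "\<exists>t\<ge>0. dist_sq t \<le> \<epsilon>\<^sup>2"
proof (cases "2 \<le> N")
  case False
  then have "dist_sq 0 = 0" unfolding partial_dist_sq_def by simp
  then show ?thesis using assms by (metis order_refl zero_le_power2)
next
  case True
  define B where "B = mass (N - 1)"
  define t where "t = B / (2 * lam 1 * \<epsilon>\<^sup>2)"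
  have B: "0 \<le> B" and lam1: "0 < lam 1"
    using mass_nonneg eigenvalue_pos True by (auto simp: B_def)
  have t: "0 \<le> t" and x: "2 * lam 1 * t = B / \<epsilon>\<^sup>2"
    using B lam1 assms by (simp_all add: t_def)
  have "dist_sq t \<le> B * exp (- (2 * lam 1 * t))"
    using partial_dist_sq_le_mass[of 1 N t] True t by (simp add: B_def)
  also have "\<dots> \<le> B / (1 + B / \<epsilon>\<^sup>2)"
    using B exp_ge_add_one_self[of "2 * lam 1 * t"] x
    by (simp add: exp_minus divide_inverse mult_left_mono le_imp_inverse_le add_pos_nonneg)
  also have "\<dots> = \<epsilon>\<^sup>2 * (B / (B + \<epsilon>\<^sup>2))"
    using assms by (simp add: field_simps)
  also have "\<dots> \<le> \<epsilon>\<^sup>2"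
    using B assms by (intro mult_left_le) (auto simp: divide_le_eq_1 add_nonneg_pos)
  finally show ?thesis using t by blast
qed

lemma mixing_time_eq_Inf:
  "0 < \<epsilon> \<Longrightarrow> mixing_time \<epsilon> = Inf {t. 0 \<le> t \<and> dist_sq t \<le> \<epsilon>\<^sup>2}"
  unfolding mixing_time_def using real_sqrt_le_iff'[OF partial_dist_sq_nonneg] by simp

lemma mixing_time_le: "0 < \<epsilon> \<Longrightarrow> 0 \<le> t \<Longrightarrow> dist_sq t \<le> \<epsilon>\<^sup>2 \<Longrightarrow> mixing_time \<epsilon> \<le> t"
  unfolding mixing_time_eq_Inf by (intro cInf_lower bdd_belowI[of _ 0]) auto

lemma mixing_time_nonneg: "0 < \<epsilon> \<Longrightarrow> 0 \<le> mixing_time \<epsilon>"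
  unfolding mixing_time_eq_Inf using exists_dist_sq_le by (intro cInf_greatest) auto

lemma mixing_time_ge:
  assumes "0 < \<epsilon>" "\<epsilon>\<^sup>2 < dist_sq t"
  shows "t \<le> mixing_time \<epsilon>"
  unfolding mixing_time_eq_Inf[OF assms(1)]
proof (rule cInf_greatest)
  show "{t. 0 \<le> t \<and> dist_sq t \<le> \<epsilon>\<^sup>2} \<noteq> {}"
    using exists_dist_sq_le[OF assms(1)] by auto
  fix s assume "s \<in> {t. 0 \<le> t \<and> dist_sq t \<le> \<epsilon>\<^sup>2}"
  then show "t \<le> s"
    using dist_sq_antimono[of s t] assms(2) by force
qed

lemma dist_sq_mixing_time_plus:
  assumes "0 < \<epsilon>" "0 < h"
  shows "dist_sq (mixing_time \<epsilon> + h) \<le> \<epsilon>\<^sup>2"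
proof -
  have "Inf {t. 0 \<le> t \<and> dist_sq t \<le> \<epsilon>\<^sup>2} < mixing_time \<epsilon> + h"
    using mixing_time_eq_Inf[OF assms(1)] assms(2) by simp
  then obtain s where "dist_sq s \<le> \<epsilon>\<^sup>2" "s < mixing_time \<epsilon> + h"
    using exists_dist_sq_le[OF assms(1)] by (subst (asm) cInf_less_iff) (auto intro: bdd_belowI[of _ 0])
  then show ?thesis
    using dist_sq_antimono[of s "mixing_time \<epsilon> + h"] by simp
qed

lemma two_le_N_if_mass_gt: "0 \<le> c \<Longrightarrow> c < mass (N - 1) \<Longrightarrow> 2 \<le> N"
  by (cases "N - 1 = 0") (auto simp: mass_def)

text \<open>Only for \<open>c\<close> below the total weight is \<open>cutoff_index c\<close> a genuine \<open>LEAST\<close> and \<open>tau c\<close> a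
  maximum over a nonempty set; along a family this holds eventually, as the total weight diverges.\<close>

context
  fixes c :: real
  assumes c_nonneg: "0 \<le> c" and c_less_mass: "c < mass (N - 1)"
begin

lemma cutoff_index: "1 \<le> cutoff_index c" "cutoff_index c < N" "c < mass (cutoff_index c)"
proof -
  have "1 \<le> N - 1 \<and> N - 1 < N \<and> c < mass (N - 1)"
    using two_le_N_if_mass_gt[OF c_nonneg c_less_mass] c_less_mass by auto
  then have "1 \<le> cutoff_index c \<and> cutoff_index c < N \<and> c < mass (cutoff_index c)"
    unfolding cutoff_index_def by (rule LeastI)
  then show "1 \<le> cutoff_index c" "cutoff_index c < N" "c < mass (cutoff_index c)" by auto
qed

lemma mass_below_cutoff_index:
  assumes "i < cutoff_index c"
  shows "mass i \<le> c"
proof (cases "i = 0")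
  case True
  then show ?thesis using c_nonneg by (simp add: mass_def)
next
  case False
  have "\<not> (1 \<le> i \<and> i < N \<and> c < mass i)"
    using not_less_Least[of i "\<lambda>j. 1 \<le> j \<and> j < N \<and> c < mass j"] assms
    unfolding cutoff_index_def by blast
  moreover have "i < N" using assms cutoff_index(2) by simp
  ultimately show ?thesis using False by simp
qed

lemma cutoff_eigenvalue_pos: "0 < lam (cutoff_index c)"
  using cutoff_index eigenvalue_pos by blast

lemma tau_at_le_tau: "cutoff_index c \<le> j \<Longrightarrow> j < N \<Longrightarrow> tau_at j \<le> tau c"
  unfolding tau_def by (intro Max_ge) auto

lemma tau_attained:
  obtains j where "cutoff_index c \<le> j" "j < N" "tau c = tau_at j"
proof -
  have "tau c \<in> tau_at ` {cutoff_index c ..< N}"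
    unfolding tau_def using cutoff_index by (intro Max_in) auto
  then show ?thesis using that by auto
qed

lemma tau_pos: "0 < tau c"
proof -
  have "0 < ln (1 + mass (cutoff_index c))"
    using cutoff_index(3) c_nonneg by simp
  then have "0 < tau_at (cutoff_index c)"
    unfolding tau_at_def using cutoff_eigenvalue_pos by simp
  then show ?thesis
    using tau_at_le_tau[of "cutoff_index c"] cutoff_index by simp
qed

lemma one_plus_mass_le_exp_tau:
  assumes "cutoff_index c \<le> j" "j < N"
  shows "1 + mass j \<le> exp (2 * lam j * tau c)"
proof -
  have lam: "0 < lam j"
    using cutoff_index assms by (intro eigenvalue_pos) auto
  have "ln (1 + mass j) \<le> 2 * lam j * tau c"
    using tau_at_le_tau[OF assms] lam by (simp add: tau_at_def pos_divide_le_eq mult.commute)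
  then have "exp (ln (1 + mass j)) \<le> exp (2 * lam j * tau c)"
    by simp
  moreover have "exp (ln (1 + mass j)) = 1 + mass j"
    using mass_nonneg[of j] by simp
  ultimately show ?thesis by linarith
qed

lemma dist_sq_before_tau:
  assumes "0 \<le> t" "t \<le> tau c"
  shows "exp (2 * lam (cutoff_index c) * (tau c - t)) - 1 \<le> dist_sq t"
proof -
  obtain j where j: "cutoff_index c \<le> j" "j < N" "tau c = tau_at j"
    using tau_attained by blast
  have j1: "1 \<le> j" and lam: "0 < lam j" and lamJ: "lam (cutoff_index c) \<le> lam j"
    using cutoff_index j by (auto intro: eigenvalue_pos eigenvalue_mono)
  have "ln (1 + mass j) = 2 * lam j * tau c"
    using j(3) lam by (simp add: tau_at_def)
  moreover have "1 + mass j = exp (ln (1 + mass j))"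
    using mass_nonneg[of j] by simp
  ultimately have mass_j: "mass j = exp (2 * lam j * tau c) - 1"
    by simp
  have "exp (2 * lam (cutoff_index c) * (tau c - t)) - 1
      \<le> exp (2 * lam j * (tau c - t)) - exp (- 2 * lam j * t)"
  proof -
    have "exp (2 * lam (cutoff_index c) * (tau c - t)) \<le> exp (2 * lam j * (tau c - t))"
      using lamJ assms by (simp add: mult_right_mono)
    moreover have "exp (- 2 * lam j * t) \<le> 1"
      using lam assms by simp
    ultimately show ?thesis by linarith
  qed
  also have "\<dots> = mass j * exp (- 2 * lam j * t)"
    unfolding mass_j left_diff_distrib exp_add[symmetric] by (simp add: algebra_simps)
  also have "\<dots> \<le> dist_sq t"
    using mass_exp_le_dist_sq j j1 assms by simp
  finally show ?thesis .
qed

lemma tau_minus_le_mixing_time: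
  assumes "0 < \<epsilon>"
  shows "tau c - \<epsilon>\<^sup>2 / lam (cutoff_index c) \<le> mixing_time \<epsilon>"
proof (cases "tau c - \<epsilon>\<^sup>2 / lam (cutoff_index c) < 0")
  case True
  then show ?thesis using mixing_time_nonneg[OF assms] by linarith
next
  case False
  have "\<epsilon>\<^sup>2 < exp (2 * \<epsilon>\<^sup>2) - 1"
    using exp_ge_add_one_self[of "2 * \<epsilon>\<^sup>2"] zero_less_power2[of \<epsilon>] assms by linarith
  also have "\<dots> \<le> dist_sq (tau c - \<epsilon>\<^sup>2 / lam (cutoff_index c))"
    using dist_sq_before_tau[of "tau c - \<epsilon>\<^sup>2 / lam (cutoff_index c)"] False
      cutoff_eigenvalue_pos assms by simp
  finally show ?thesis by (rule mixing_time_ge[OF assms])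
qed

lemma mass_exp_gap_le:
  assumes "cutoff_index c \<le> k" "Suc k < N" "tau c < t"
  shows "mass k * (exp (- 2 * lam k * t) - exp (- 2 * lam (Suc k) * t))
       \<le> t / (t - tau c) * (exp (- 2 * lam k * (t - tau c)) - exp (- 2 * lam (Suc k) * (t - tau c)))"
proof -
  have lam: "lam k \<le> lam (Suc k)"
    using cutoff_index assms by (intro eigenvalue_mono) auto
  have "mass k \<le> exp (2 * lam k * tau c)"
    using one_plus_mass_le_exp_tau[of k] assms by simp
  then have "mass k * (exp (- 2 * lam k * t) - exp (- 2 * lam (Suc k) * t))
      \<le> exp (2 * lam k * (t - (t - tau c))) * (exp (- 2 * lam k * t) - exp (- 2 * lam (Suc k) * t))"
    using lam tau_pos assms by (intro mult_right_mono) (auto simp: mult_right_mono)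
  also have "\<dots> \<le> t / (t - tau c) * (exp (- 2 * lam k * (t - tau c)) - exp (- 2 * lam (Suc k) * (t - tau c)))"
    using tau_pos assms lam by (intro exp_gap_rescale_le) auto
  finally show ?thesis .
qed

text \<open>Abel summation over the tail: by the previous lemma, each increment of the eigenvalue
  costs at most the corresponding increment of the decay at the shifted time \<open>t - tau c\<close>.\<close>

lemma partial_dist_sq_tail_le:
  assumes "cutoff_index c \<le> k" "k < N" "tau c < t"
  shows "partial_dist_sq (cutoff_index c) (Suc k) t
       \<le> mass k * exp (- 2 * lam k * t)
         + t / (t - tau c) * (exp (- 2 * lam (cutoff_index c) * (t - tau c)) - exp (- 2 * lam k * (t - tau c)))"
  using assms(1,2)
proof (induction k rule: nat_induct_at_least)
  case base
  have "a (cutoff_index c) \<le> mass (cutoff_index c)"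
    unfolding mass_def using cutoff_index by (intro member_le_sum weight_nonneg) auto
  then show ?case
    unfolding partial_dist_sq_def by (simp add: mult_right_mono)
next
  case (Suc k)
  let ?J = "cutoff_index c" and ?u = "t - tau c"
  have "partial_dist_sq ?J (Suc (Suc k)) t
      = partial_dist_sq ?J (Suc k) t + a (Suc k) * exp (- 2 * lam (Suc k) * t)"
    using Suc.hyps unfolding partial_dist_sq_def by simp
  also have "\<dots> \<le> mass (Suc k) * exp (- 2 * lam (Suc k) * t)
      + mass k * (exp (- 2 * lam k * t) - exp (- 2 * lam (Suc k) * t))
      + t / ?u * (exp (- 2 * lam ?J * ?u) - exp (- 2 * lam k * ?u))"
    using Suc.IH Suc.prems by (simp add: mass_Suc algebra_simps)
  also have "\<dots> \<le> mass (Suc k) * exp (- 2 * lam (Suc k) * t)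
      + t / ?u * (exp (- 2 * lam k * ?u) - exp (- 2 * lam (Suc k) * ?u))
      + t / ?u * (exp (- 2 * lam ?J * ?u) - exp (- 2 * lam k * ?u))"
    using mass_exp_gap_le[OF Suc.hyps Suc.prems assms(3)] by simp
  finally show ?case by (simp add: algebra_simps)
qed

lemma tail_after_tau:
  assumes s: "0 < s"
  shows "partial_dist_sq (cutoff_index c) N (tau c + s)
       \<le> (2 + tau c / s) * exp (- 2 * lam (cutoff_index c) * s)"
proof -
  let ?J = "cutoff_index c" and ?t = "tau c + s" and ?K = "N - 1"
  have K: "?J \<le> ?K" "?K < N" "Suc ?K = N" and lam: "lam ?J \<le> lam ?K"
    using cutoff_index by (auto intro: eigenvalue_mono)
  have "mass ?K * exp (- 2 * lam ?K * ?t) \<le> exp (2 * lam ?K * tau c) * exp (- 2 * lam ?K * ?t)"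
    using one_plus_mass_le_exp_tau[OF K(1,2)] by (intro mult_right_mono) auto
  also have "\<dots> = exp (- 2 * lam ?K * s)"
    unfolding exp_add[symmetric] by (simp add: algebra_simps)
  also have "\<dots> \<le> exp (- 2 * lam ?J * s)"
    using lam s by simp
  finally have "partial_dist_sq ?J N ?t
      \<le> exp (- 2 * lam ?J * s) + ?t / s * (exp (- 2 * lam ?J * s) - exp (- 2 * lam ?K * s))"
    using partial_dist_sq_tail_le[OF K(1,2), of ?t] s K(3) by simp
  also have "\<dots> \<le> exp (- 2 * lam ?J * s) + ?t / s * exp (- 2 * lam ?J * s)"
    using s tau_pos by (intro add_left_mono mult_left_mono) auto
  also have "\<dots> = (2 + tau c / s) * exp (- 2 * lam ?J * s)"
    using s by (simp add: field_simps)
  finally show ?thesis .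
qed

end

lemma cutoff_index_mono:
  assumes "0 \<le> c" "c \<le> c'" "c' < mass (N - 1)"
  shows "cutoff_index c \<le> cutoff_index c'"
  unfolding cutoff_index_def[of c]
  using cutoff_index[of c'] assms by (intro Least_le) auto

lemma tau_antimono:
  assumes "0 \<le> c" "c \<le> c'" "c' < mass (N - 1)"
  shows "tau c' \<le> tau c"
  unfolding tau_def using cutoff_index[of c'] cutoff_index_mono[OF assms] assms
  by (intro Max_mono) auto

lemma tau_eq_if_gap_large:
  assumes c: "0 \<le> c" "c \<le> c'" "c' < mass (N - 1)"
    and large: "ln (1 + c') / 2 < tau c * lam (cutoff_index c)"
  shows "tau c' = tau c"
proof -
  have c_mass: "c < mass (N - 1)" using c by simp
  obtain j where j: "cutoff_index c \<le> j" "j < N" "tau c = tau_at j"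
    using tau_attained[OF c(1) c_mass] by blast
  have lam: "0 < lam (cutoff_index c)" "lam (cutoff_index c) \<le> lam j"
    using cutoff_eigenvalue_pos[OF c(1) c_mass] cutoff_index[OF c(1) c_mass] j
    by (auto intro: eigenvalue_mono)
  have "\<not> j < cutoff_index c'"
  proof
    assume "j < cutoff_index c'"
    then have "mass j \<le> c'" using mass_below_cutoff_index c by simp
    then have "tau_at j \<le> ln (1 + c') / (2 * lam (cutoff_index c))"
      unfolding tau_at_def using mass_nonneg[of j] lam by (intro frac_le) auto
    then show False
      using large j(3) lam by (simp add: field_simps)
  qed
  then have "tau c \<le> tau c'"
    using tau_at_le_tau[of c' j] c j by simp
  then show ?thesis
    using tau_antimono[OF c] by simp
qed

text \<open>The spectrum is cut into three blocks at the indices for \<open>c' \<le> c\<close>: below the first,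
  the total weight is at most \<open>c'\<close>; between them, at most \<open>c\<close>.\<close>

lemma dist_sq_le_blocks:
  assumes c: "0 \<le> c'" "c' \<le> c" "c < mass (N - 1)" and t: "0 \<le> t"
  shows "dist_sq t \<le> c' + c * exp (- 2 * lam (cutoff_index c') * t)
                    + partial_dist_sq (cutoff_index c) N t"
proof -
  let ?J' = "cutoff_index c'" and ?J = "cutoff_index c"
  have c': "c' < mass (N - 1)" using c by simp
  have J: "1 \<le> ?J'" "?J' \<le> ?J" "?J < N"
    using cutoff_index[OF c(1) c'] cutoff_index[of c] cutoff_index_mono c by auto
  have "dist_sq t = partial_dist_sq 1 ?J' t + partial_dist_sq ?J' ?J t + partial_dist_sq ?J N t"
    using partial_dist_sq_split[of 1 ?J' N t] partial_dist_sq_split[of ?J' ?J N t] J by simp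
  moreover have "partial_dist_sq 1 ?J' t \<le> c'"
    using partial_dist_sq_head_le[of ?J' t] mass_below_cutoff_index[OF c(1) c', of "?J' - 1"] J t
    by simp
  moreover have "partial_dist_sq ?J' ?J t \<le> c * exp (- 2 * lam ?J' * t)"
  proof -
    have "partial_dist_sq ?J' ?J t \<le> mass (?J - 1) * exp (- 2 * lam ?J' * t)"
      using partial_dist_sq_le_mass J t by simp
    also have "\<dots> \<le> c * exp (- 2 * lam ?J' * t)"
      using mass_below_cutoff_index[of c "?J - 1"] c J by (intro mult_right_mono) auto
    finally show ?thesis .
  qed
  ultimately show ?thesis by linarith
qed

lemma dist_sq_after_tau:
  assumes c: "0 \<le> c'" "c' \<le> c" "c < mass (N - 1)" and s: "0 < s"
  shows "dist_sq (tau c + s) \<le> c' + c * exp (- 2 * lam (cutoff_index c') * tau c)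
                             + (2 + tau c / s) * exp (- 2 * lam (cutoff_index c) * s)"
proof -
  have c_nonneg: "0 \<le> c" using c by simp
  have "exp (- 2 * lam (cutoff_index c') * (tau c + s)) \<le> exp (- 2 * lam (cutoff_index c') * tau c)"
    using cutoff_eigenvalue_pos[of c'] c s by (simp add: mult_le_cancel_left_pos)
  then have "c * exp (- 2 * lam (cutoff_index c') * (tau c + s)) \<le> c * exp (- 2 * lam (cutoff_index c') * tau c)"
    using c_nonneg by (rule mult_left_mono)
  moreover have "0 \<le> tau c + s"
    using tau_pos[OF c_nonneg c(3)] s by simp
  ultimately show ?thesis
    using dist_sq_le_blocks[OF c, of "tau c + s"] tail_after_tau[OF c_nonneg c(3) s] by linarith
qed

lemma dist_sq_after_mixing_time:
  assumes c: "0 \<le> c'" "c' \<le> c" "c < mass (N - 1)" and \<epsilon>: "0 < \<epsilon>" and s: "0 < s"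
  shows "dist_sq (mixing_time \<epsilon> + 2 * s)
       \<le> c' + c * exp (- 2 * lam (cutoff_index c') * mixing_time \<epsilon>)
         + \<epsilon>\<^sup>2 * exp (- 2 * lam (cutoff_index c) * s)"
proof -
  let ?T = "mixing_time \<epsilon>" and ?J = "cutoff_index c"
  have J: "1 \<le> ?J" "?J < N"
    using cutoff_index c by auto
  have T: "0 \<le> ?T + 2 * s"
    using mixing_time_nonneg[OF \<epsilon>] s by simp
  have "exp (- 2 * lam (cutoff_index c') * (?T + 2 * s)) \<le> exp (- 2 * lam (cutoff_index c') * ?T)"
    using cutoff_eigenvalue_pos[of c'] c s by (simp add: mult_le_cancel_left_pos)
  then have mid: "c * exp (- 2 * lam (cutoff_index c') * (?T + 2 * s)) \<le> c * exp (- 2 * lam (cutoff_index c') * ?T)"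
    using c by (intro mult_left_mono) auto
  have "partial_dist_sq ?J N (?T + s) \<le> \<epsilon>\<^sup>2"
    using dist_sq_mixing_time_plus[OF \<epsilon> s] partial_dist_sq_split[of 1 ?J N "?T + s"]
      partial_dist_sq_nonneg[of 1 ?J "?T + s"] J by simp
  then have "exp (- 2 * lam ?J * s) * partial_dist_sq ?J N (?T + s) \<le> \<epsilon>\<^sup>2 * exp (- 2 * lam ?J * s)"
    by (metis exp_ge_zero mult.commute mult_left_mono)
  moreover have "partial_dist_sq ?J N (?T + 2 * s) \<le> exp (- 2 * lam ?J * s) * partial_dist_sq ?J N (?T + s)"
    using partial_dist_sq_shift[of ?J N s "?T + s"] J s by (simp add: add.assoc)
  ultimately show ?thesis
    using dist_sq_le_blocks[OF c T] mid by linarith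
qed

lemma mixing_time_le_tau_plus:
  assumes c: "0 \<le> c'" "c' \<le> c" "c < mass (N - 1)" and \<epsilon>: "0 < \<epsilon>" and M: "0 < M"
    and small: "c' + c * exp (- 2 * lam (cutoff_index c') * tau c)
                + (2 + tau c * lam (cutoff_index c) / M) * exp (- 2 * M) \<le> \<epsilon>\<^sup>2"
  shows "mixing_time \<epsilon> \<le> tau c + M / lam (cutoff_index c)"
proof (rule mixing_time_le[OF \<epsilon>])
  let ?l = "lam (cutoff_index c)"
  have l: "0 < ?l" using cutoff_eigenvalue_pos c by simp
  have "0 < tau c" using tau_pos c by simp
  then show "0 \<le> tau c + M / ?l"
    using l M by simp
  have "tau c / (M / ?l) = tau c * ?l / M" "?l * (M / ?l) = M"
    using l by simp_all
  then show "dist_sq (tau c + M / ?l) \<le> \<epsilon>\<^sup>2"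
    using dist_sq_after_tau[OF c, of "M / ?l"] l M small by (simp add: mult.assoc)
qed

lemma mixing_time_le_mixing_time_plus:
  assumes c: "0 \<le> c'" "c' \<le> c" "c < mass (N - 1)" and \<epsilon>: "0 < \<epsilon>" "0 < \<delta>" and M: "0 < M"
    and small: "c' + c * exp (- 2 * lam (cutoff_index c') * mixing_time \<epsilon>) + \<epsilon>\<^sup>2 * exp (- 2 * M) \<le> \<delta>\<^sup>2"
  shows "mixing_time \<delta> \<le> mixing_time \<epsilon> + 2 * M / lam (cutoff_index c)"
proof (rule mixing_time_le[OF \<epsilon>(2)])
  let ?l = "lam (cutoff_index c)"
  have l: "0 < ?l" using cutoff_eigenvalue_pos c by simp
  show "0 \<le> mixing_time \<epsilon> + 2 * M / ?l"
    using mixing_time_nonneg[OF \<epsilon>(1)] l M by simp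
  have "?l * (M / ?l) = M" "2 * M / ?l = 2 * (M / ?l)"
    using l by simp_all
  then show "dist_sq (mixing_time \<epsilon> + 2 * M / ?l) \<le> \<delta>\<^sup>2"
    using dist_sq_after_mixing_time[OF c \<epsilon>(1), of "M / ?l"] l M small by (simp add: mult.assoc)
qed

lemma dist_sq_after_tau_le:
  assumes c: "0 \<le> c'" "c' \<le> c" "c < mass (N - 1)" and b: "0 < b"
    and K: "K\<^sub>1 \<le> tau c * lam (cutoff_index c')" "K\<^sub>2 \<le> b * (tau c * lam (cutoff_index c))"
  shows "dist_sq ((1 + b) * tau c) \<le> c' + c * exp (- 2 * K\<^sub>1) + (2 + 1 / b) * exp (- 2 * K\<^sub>2)"
proof -
  have tau: "0 < tau c" using tau_pos c by simp
  have "dist_sq (tau c + b * tau c) \<le> c' + c * exp (- 2 * lam (cutoff_index c') * tau c)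
      + (2 + tau c / (b * tau c)) * exp (- 2 * lam (cutoff_index c) * (b * tau c))"
    using tau b by (intro dist_sq_after_tau c) simp
  moreover have "c * exp (- 2 * lam (cutoff_index c') * tau c) \<le> c * exp (- 2 * K\<^sub>1)"
    using K(1) c by (intro mult_left_mono) (auto simp: mult_ac)
  moreover have "(2 + tau c / (b * tau c)) * exp (- 2 * lam (cutoff_index c) * (b * tau c))
               \<le> (2 + 1 / b) * exp (- 2 * K\<^sub>2)"
    using K(2) tau b by (intro mult_mono) (auto simp: mult_ac)
  moreover have "(1 + b) * tau c = tau c + b * tau c"
    by (simp add: algebra_simps)
  ultimately show ?thesis by simp
qed

lemma mixing_time_gap_le:
  assumes c: "0 \<le> c" "c < mass (N - 1)" "c \<le> \<epsilon>\<^sup>2 / 4" and \<epsilon>: "0 < \<epsilon>" and M: "1 \<le> M"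
    and K: "tau c * lam (cutoff_index c) \<le> K" "(2 + K) * exp (- 2 * M) \<le> \<epsilon>\<^sup>2 / 2"
  shows "mixing_time \<epsilon> * lam (cutoff_index c) \<le> K + M"
proof -
  let ?l = "lam (cutoff_index c)"
  have l: "0 < ?l" and tau: "0 < tau c"
    using cutoff_eigenvalue_pos tau_pos c by auto
  have "0 < tau c * ?l" using tau l by simp
  then have "tau c * ?l \<le> K * M"
    using K(1) mult_left_mono[OF M, of K] by linarith
  then have "tau c * ?l / M \<le> K"
    using M by (simp add: divide_le_eq)
  then have "(2 + tau c * ?l / M) * exp (- 2 * M) \<le> (2 + K) * exp (- 2 * M)"
    by (intro mult_right_mono) auto
  moreover have "c * exp (- 2 * ?l * tau c) \<le> c"
    using tau l c by (intro mult_left_le) auto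
  ultimately have "c + c * exp (- 2 * ?l * tau c) + (2 + tau c * ?l / M) * exp (- 2 * M) \<le> \<epsilon>\<^sup>2"
    using c(3) K(2) by linarith
  then have "mixing_time \<epsilon> \<le> tau c + M / ?l"
    using c \<epsilon> M by (intro mixing_time_le_tau_plus) auto
  then have "mixing_time \<epsilon> * ?l \<le> tau c * ?l + M"
    using l by (simp add: field_simps)
  then show ?thesis using K(1) by linarith
qed

lemma mixing_time_near_tau_le:
  assumes c: "0 \<le> c'" "c' \<le> c" "c < mass (N - 1)" "c' \<le> \<epsilon>\<^sup>2 / 3" and \<epsilon>: "0 < \<epsilon>"
    and K: "K \<le> tau c * lam (cutoff_index c')" "c * exp (- 2 * K) \<le> \<epsilon>\<^sup>2 / 3"
    and M: "1 \<le> M" "3 * exp 1 * exp (- 2 * M) \<le> \<epsilon>\<^sup>2 / 3"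
    and large: "1 \<le> tau c * lam (cutoff_index c)"
  shows "\<bar>mixing_time \<epsilon> - tau c\<bar> \<le> max (\<epsilon>\<^sup>2) M * sqrt (tau c / lam (cutoff_index c))"
proof -
  let ?l = "lam (cutoff_index c)"
  define x where "x = sqrt (tau c * ?l)"
  have l: "0 < ?l" and tau: "0 < tau c"
    using cutoff_eigenvalue_pos tau_pos c by auto
  have x: "1 \<le> x" "x * x = tau c * ?l" "x / ?l = sqrt (tau c / ?l)"
    using large l tau sqrt_mult_divide[OF tau l] by (simp_all add: x_def)
  have "c * exp (- 2 * lam (cutoff_index c') * tau c) \<le> c * exp (- 2 * K)"
    using K(1) c by (intro mult_left_mono) (auto simp: mult_ac)
  moreover have "(2 + tau c * ?l / (M * x)) * exp (- 2 * (M * x)) \<le> 3 * exp 1 * exp (- 2 * M)"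
    using linear_times_exp_decay_le[OF x(1) M(1)] x(1,2) by (simp add: x(2)[symmetric] mult.assoc)
  ultimately have "c' + c * exp (- 2 * lam (cutoff_index c') * tau c)
      + (2 + tau c * ?l / (M * x)) * exp (- 2 * (M * x)) \<le> \<epsilon>\<^sup>2"
    using c(4) K(2) M(2) by linarith
  then have "mixing_time \<epsilon> \<le> tau c + M * (x / ?l)"
    using c \<epsilon> M(1) x(1) mixing_time_le_tau_plus[of c' c \<epsilon> "M * x"] by simp
  moreover have "tau c - \<epsilon>\<^sup>2 * (1 / ?l) \<le> mixing_time \<epsilon>"
    using tau_minus_le_mixing_time c \<epsilon> by simp
  moreover have "1 / ?l \<le> x / ?l"
    using x(1) l by (simp add: divide_right_mono)
  ultimately have "\<bar>mixing_time \<epsilon> - tau c\<bar> \<le> max (\<epsilon>\<^sup>2) M * (x / ?l)"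
    using mult_left_mono[of "1 / ?l" "x / ?l" "\<epsilon>\<^sup>2"]
      mult_right_mono[of "\<epsilon>\<^sup>2" "max (\<epsilon>\<^sup>2) M" "x / ?l"] mult_right_mono[of M "max (\<epsilon>\<^sup>2) M" "x / ?l"]
      x(1) l by fastforce
  then show ?thesis unfolding x(3) .
qed

end

locale spectral_family =
  fixes N :: "nat \<Rightarrow> nat" and a lam :: "nat \<Rightarrow> nat \<Rightarrow> real"
  assumes profile: "spectral_profile (N n) (a n) (lam n)"
    and total_mass_at_top: "filterlim (\<lambda>n. spectral_profile.mass (a n) (N n - 1)) at_top sequentially"
begin

abbreviation mass where "mass n \<equiv> spectral_profile.mass (a n)"
abbreviation dist_sq where "dist_sq n \<equiv> spectral_profile.partial_dist_sq (a n) (lam n) 1 (N n)"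
abbreviation mixing_time where "mixing_time n \<equiv> spectral_profile.mixing_time (N n) (a n) (lam n)"
abbreviation tau where "tau n \<equiv> spectral_profile.tau (N n) (a n) (lam n)"
abbreviation cutoff_eigenvalue where
  "cutoff_eigenvalue n c \<equiv> lam n (spectral_profile.cutoff_index (N n) (a n) c)"

definition dist_cutoff :: "(nat \<Rightarrow> real) \<Rightarrow> bool" where
  "dist_cutoff t \<longleftrightarrow> (\<forall>\<^sub>F n in sequentially. 0 < t n) \<and>
     (\<forall>b. 0 < b \<and> b < 1 \<longrightarrow> (\<lambda>n. dist_sq n ((1 + b) * t n)) \<longlonglongrightarrow> 0 \<and>
        filterlim (\<lambda>n. dist_sq n ((1 - b) * t n)) at_top sequentially)"

lemma dist_cutoffD:
  assumes "dist_cutoff t" "0 < b" "b < 1"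
  shows "(\<lambda>n. dist_sq n ((1 + b) * t n)) \<longlonglongrightarrow> 0"
    and "filterlim (\<lambda>n. dist_sq n ((1 - b) * t n)) at_top sequentially"
  using assms unfolding dist_cutoff_def by blast+

lemma eventually_mass_gt: "\<forall>\<^sub>F n in sequentially. c < mass n (N n - 1)"
  using total_mass_at_top by (simp add: filterlim_at_top_dense)

lemma cutoff_time_gap_at_top:
  assumes cut: "dist_cutoff t" and c: "0 < c"
  shows "filterlim (\<lambda>n. t n * cutoff_eigenvalue n c) at_top sequentially"
  unfolding filterlim_at_top
proof
  fix Z :: real
  have "(\<lambda>n. dist_sq n ((1 + 1/2) * t n)) \<longlonglongrightarrow> 0"
    by (rule dist_cutoffD(1)[OF cut]) simp_all
  then have "\<forall>\<^sub>F n in sequentially. dist_sq n ((1 + 1/2) * t n) < c * exp (- 3 * Z)"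
    using c by (intro order_tendstoD) auto
  moreover have "\<forall>\<^sub>F n in sequentially. 0 < t n"
    using cut unfolding dist_cutoff_def by simp
  ultimately show "\<forall>\<^sub>F n in sequentially. Z \<le> t n * cutoff_eigenvalue n c"
    using eventually_mass_gt[of c]
  proof eventually_elim
    case (elim n)
    interpret P: spectral_profile "N n" "a n" "lam n" by (rule profile)
    let ?J = "P.cutoff_index c"
    have "exp (- 2 * lam n ?J * ((1 + 1/2) * t n)) = exp (- 3 * (t n * lam n ?J))"
      by (simp add: algebra_simps)
    moreover have "c \<le> P.mass ?J"
      using P.cutoff_index(3) c elim by (simp add: less_imp_le)
    ultimately have "c * exp (- 3 * (t n * lam n ?J)) \<le> P.mass ?J * exp (- 2 * lam n ?J * ((1 + 1/2) * t n))"
      by (simp add: mult_right_mono)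
    also have "\<dots> \<le> P.dist_sq ((1 + 1/2) * t n)"
      using P.cutoff_index c elim by (intro P.mass_exp_le_dist_sq) auto
    finally have "c * exp (- 3 * (t n * lam n ?J)) < c * exp (- 3 * Z)"
      using elim(1) by linarith
    then show ?case
      using c by simp
  qed
qed

lemma mixing_time_gap_of_cutoff:
  assumes cut: "dist_cutoff t" and c: "0 < c" and \<epsilon>: "0 < \<epsilon>"
  shows "filterlim (\<lambda>n. mixing_time n \<epsilon> * cutoff_eigenvalue n c) at_top sequentially"
proof (rule filterlim_at_top_mono)
  show "filterlim (\<lambda>n. 1/2 * (t n * cutoff_eigenvalue n c)) at_top sequentially"
    by (rule filterlim_tendsto_pos_mult_at_top[OF tendsto_const _ cutoff_time_gap_at_top[OF cut c]]) simp
  have "filterlim (\<lambda>n. dist_sq n ((1 - 1/2) * t n)) at_top sequentially"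
    by (rule dist_cutoffD(2)[OF cut]) simp_all
  then have "\<forall>\<^sub>F n in sequentially. \<epsilon>\<^sup>2 < dist_sq n ((1 - 1/2) * t n)"
    by (simp add: filterlim_at_top_dense)
  then show "\<forall>\<^sub>F n in sequentially. 1/2 * (t n * cutoff_eigenvalue n c) \<le> mixing_time n \<epsilon> * cutoff_eigenvalue n c"
    using eventually_mass_gt[of c]
  proof eventually_elim
    case (elim n)
    interpret P: spectral_profile "N n" "a n" "lam n" by (rule profile)
    have "(1 - 1/2) * t n \<le> mixing_time n \<epsilon>"
      using P.mixing_time_ge[OF \<epsilon> elim(1)] .
    then show ?case
      using P.cutoff_eigenvalue_pos c elim by (simp add: mult_right_mono mult.assoc)
  qed
qed

lemma tau_eventually_eq:
  assumes c: "0 < c" "c \<le> c'"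
    and gap: "filterlim (\<lambda>n. tau n c * cutoff_eigenvalue n c) at_top sequentially"
  shows "\<forall>\<^sub>F n in sequentially. tau n c' = tau n c"
proof -
  have "\<forall>\<^sub>F n in sequentially. ln (1 + c') / 2 < tau n c * cutoff_eigenvalue n c"
    using gap[unfolded filterlim_at_top_dense] by blast
  then show ?thesis
    using eventually_mass_gt[of c']
    by eventually_elim (use c spectral_profile.tau_eq_if_gap_large[OF profile] in auto)
qed

lemma diagonal_gap_mono:
  assumes c: "0 < c" "c \<le> c'"
    and gap: "filterlim (\<lambda>n. tau n c * cutoff_eigenvalue n c) at_top sequentially"
  shows "filterlim (\<lambda>n. tau n c' * cutoff_eigenvalue n c') at_top sequentially"
proof (rule filterlim_at_top_mono[OF gap])
  show "\<forall>\<^sub>F n in sequentially. tau n c * cutoff_eigenvalue n c \<le> tau n c' * cutoff_eigenvalue n c'"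
    using tau_eventually_eq[OF c gap] eventually_mass_gt[of c']
  proof eventually_elim
    case (elim n)
    interpret P: spectral_profile "N n" "a n" "lam n" by (rule profile)
    have "cutoff_eigenvalue n c \<le> cutoff_eigenvalue n c'"
      using P.cutoff_index[of c] P.cutoff_index[of c'] P.cutoff_index_mono[of c c'] c elim
      by (intro P.eigenvalue_mono) auto
    then show ?case
      using P.tau_pos[of c] c elim by (simp add: mult_left_mono)
  qed
qed

lemma tau_eventually_le:
  assumes c: "0 < c" "0 < c'"
    and gap: "filterlim (\<lambda>n. tau n c * cutoff_eigenvalue n c) at_top sequentially"
  shows "\<forall>\<^sub>F n in sequentially. tau n c \<le> tau n c'"
proof (cases "c \<le> c'")
  case True
  show ?thesis using tau_eventually_eq[OF c(1) True gap] by eventually_elim simp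
next
  case False
  show ?thesis
    using eventually_mass_gt[of c]
    by eventually_elim (use False c spectral_profile.tau_antimono[OF profile] in auto)
qed

lemma diagonal_gap_of_mixing_time_gap:
  assumes gap: "\<And>c. 0 < c \<Longrightarrow> filterlim (\<lambda>n. mixing_time n \<epsilon> * cutoff_eigenvalue n c) at_top sequentially"
    and \<epsilon>: "0 < \<epsilon>" and c: "0 < c"
  shows "filterlim (\<lambda>n. tau n c * cutoff_eigenvalue n c) at_top sequentially"
proof -
  define c\<^sub>0 where "c\<^sub>0 = min c (\<epsilon>\<^sup>2 / 4)"
  have c\<^sub>0: "0 < c\<^sub>0" "c\<^sub>0 \<le> c" "c\<^sub>0 \<le> \<epsilon>\<^sup>2 / 4"
    using c \<epsilon> by (auto simp: c\<^sub>0_def)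
  have "filterlim (\<lambda>n. tau n c\<^sub>0 * cutoff_eigenvalue n c\<^sub>0) at_top sequentially"
    unfolding filterlim_at_top_ge[where c = 0]
  proof (intro allI impI)
    fix K :: real assume "0 \<le> K"
    obtain M where M: "1 \<le> M" "(2 + K) * exp (- 2 * M) \<le> \<epsilon>\<^sup>2 / 2"
      using exists_exp_decay_le[of "2 + K" "\<epsilon>\<^sup>2 / 2"] \<epsilon> \<open>0 \<le> K\<close> by auto
    have "\<forall>\<^sub>F n in sequentially. K + M < mixing_time n \<epsilon> * cutoff_eigenvalue n c\<^sub>0"
      using gap[OF c\<^sub>0(1)] by (simp add: filterlim_at_top_dense)
    then show "\<forall>\<^sub>F n in sequentially. K \<le> tau n c\<^sub>0 * cutoff_eigenvalue n c\<^sub>0"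
      using eventually_mass_gt[of c\<^sub>0]
    proof eventually_elim
      case (elim n)
      show ?case
      proof (rule ccontr)
        assume "\<not> ?case"
        then have "mixing_time n \<epsilon> * cutoff_eigenvalue n c\<^sub>0 \<le> K + M"
          using c\<^sub>0 elim(2)
          by (intro spectral_profile.mixing_time_gap_le[OF profile _ _ c\<^sub>0(3) \<epsilon> M(1) _ M(2)]) auto
        then show False using elim(1) by linarith
      qed
    qed
  qed
  then show ?thesis
    using diagonal_gap_mono c\<^sub>0 by blast
qed

lemma tau_gap_of_diagonal_gap:
  assumes gap: "\<And>c. 0 < c \<Longrightarrow> filterlim (\<lambda>n. tau n c * cutoff_eigenvalue n c) at_top sequentially"
    and c: "0 < c'" "0 < c"
  shows "filterlim (\<lambda>n. tau n c' * cutoff_eigenvalue n c) at_top sequentially"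
proof (rule filterlim_at_top_mono[OF gap[OF c(2)]])
  show "\<forall>\<^sub>F n in sequentially. tau n c * cutoff_eigenvalue n c \<le> tau n c' * cutoff_eigenvalue n c"
    using tau_eventually_le[OF c(2,1) gap[OF c(2)]] eventually_mass_gt[of c]
    by eventually_elim
      (use c spectral_profile.cutoff_eigenvalue_pos[OF profile] in \<open>auto intro: mult_right_mono less_imp_le\<close>)
qed

lemma diagonal_gap_of_tau_gap:
  assumes gap: "\<And>c. 0 < c \<Longrightarrow> filterlim (\<lambda>n. tau n c' * cutoff_eigenvalue n c) at_top sequentially"
    and c: "0 < c'" "0 < c"
  shows "filterlim (\<lambda>n. tau n c * cutoff_eigenvalue n c) at_top sequentially"
proof (rule filterlim_at_top_mono[OF gap[OF c(2)]])
  show "\<forall>\<^sub>F n in sequentially. tau n c' * cutoff_eigenvalue n c \<le> tau n c * cutoff_eigenvalue n c"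
    using tau_eventually_le[OF c(1,2) gap[OF c(1)]] eventually_mass_gt[of c]
    by eventually_elim
      (use c spectral_profile.cutoff_eigenvalue_pos[OF profile] in \<open>auto intro: mult_right_mono less_imp_le\<close>)
qed

lemma dist_sq_before_tau_at_top:
  assumes gap: "filterlim (\<lambda>n. tau n c * cutoff_eigenvalue n c) at_top sequentially"
    and c: "0 < c" and b: "0 < b" "b \<le> 1"
  shows "filterlim (\<lambda>n. dist_sq n ((1 - b) * tau n c)) at_top sequentially"
proof (rule filterlim_at_top_mono)
  show "filterlim (\<lambda>n. 2 * b * (tau n c * cutoff_eigenvalue n c)) at_top sequentially"
    using b by (intro filterlim_tendsto_pos_mult_at_top[OF tendsto_const _ gap]) simp
  show "\<forall>\<^sub>F n in sequentially. 2 * b * (tau n c * cutoff_eigenvalue n c) \<le> dist_sq n ((1 - b) * tau n c)"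
    using eventually_mass_gt[of c]
  proof eventually_elim
    case (elim n)
    interpret P: spectral_profile "N n" "a n" "lam n" by (rule profile)
    let ?x = "2 * cutoff_eigenvalue n c * (tau n c - (1 - b) * tau n c)"
    have tau: "0 < tau n c" using P.tau_pos c elim by simp
    have "2 * b * (tau n c * cutoff_eigenvalue n c) = ?x"
      by (simp add: algebra_simps)
    also have "\<dots> \<le> exp ?x - 1"
      using exp_ge_add_one_self[of ?x] by linarith
    also have "\<dots> \<le> dist_sq n ((1 - b) * tau n c)"
      using P.dist_sq_before_tau[of c "(1 - b) * tau n c"] c elim tau b
      by (simp add: mult_le_cancel_right1)
    finally show ?case .
  qed
qed

lemma dist_sq_after_tau_tendsto_0:
  assumes gap: "\<And>c' c. 0 < c' \<Longrightarrow> 0 < c \<Longrightarrow>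
                  filterlim (\<lambda>n. tau n c' * cutoff_eigenvalue n c) at_top sequentially"
    and c: "0 < c" and b: "0 < b"
  shows "(\<lambda>n. dist_sq n ((1 + b) * tau n c)) \<longlonglongrightarrow> 0"
proof (rule order_tendstoI)
  fix r :: real assume "r < 0"
  then show "\<forall>\<^sub>F n in sequentially. r < dist_sq n ((1 + b) * tau n c)"
    using spectral_profile.partial_dist_sq_nonneg[OF profile]
    by (intro always_eventually allI) (auto intro: less_le_trans)
next
  fix r :: real assume r: "0 < r"
  define c' where "c' = min c (r / 4)"
  have c': "0 < c'" "c' \<le> c" "c' \<le> r / 4"
    using c r by (auto simp: c'_def)
  obtain K\<^sub>1 where K\<^sub>1: "c * exp (- 2 * K\<^sub>1) \<le> r / 4"
    using exists_exp_decay_le[of c "r / 4"] c r by auto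
  obtain K\<^sub>2 where K\<^sub>2: "(2 + 1 / b) * exp (- 2 * K\<^sub>2) \<le> r / 4"
    using exists_exp_decay_le[of "2 + 1 / b" "r / 4"] b r by auto
  have "\<forall>\<^sub>F n in sequentially. K\<^sub>1 \<le> tau n c * cutoff_eigenvalue n c'"
    using gap[OF c c'(1)] by (simp add: filterlim_at_top)
  moreover have "\<forall>\<^sub>F n in sequentially. K\<^sub>2 \<le> b * (tau n c * cutoff_eigenvalue n c)"
    using filterlim_tendsto_pos_mult_at_top[OF tendsto_const b gap[OF c c]] by (simp add: filterlim_at_top)
  ultimately show "\<forall>\<^sub>F n in sequentially. dist_sq n ((1 + b) * tau n c) < r"
    using eventually_mass_gt[of c]
  proof eventually_elim
    case (elim n)
    then have "dist_sq n ((1 + b) * tau n c) \<le> c' + c * exp (- 2 * K\<^sub>1) + (2 + 1 / b) * exp (- 2 * K\<^sub>2)"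
      using c' b by (intro spectral_profile.dist_sq_after_tau_le[OF profile]) auto
    then show ?case
      using c'(3) K\<^sub>1 K\<^sub>2 r by linarith
  qed
qed

lemma dist_cutoff_at_tau:
  assumes gap: "\<And>c' c. 0 < c' \<Longrightarrow> 0 < c \<Longrightarrow>
                  filterlim (\<lambda>n. tau n c' * cutoff_eigenvalue n c) at_top sequentially"
    and c: "0 < c"
  shows "dist_cutoff (\<lambda>n. tau n c)"
  unfolding dist_cutoff_def
proof (intro conjI allI impI)
  show "\<forall>\<^sub>F n in sequentially. 0 < tau n c"
    using eventually_mass_gt[of c] by eventually_elim (use c spectral_profile.tau_pos[OF profile] in auto)
  fix b :: real assume "0 < b \<and> b < 1"
  then show "(\<lambda>n. dist_sq n ((1 + b) * tau n c)) \<longlonglongrightarrow> 0"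
    and "filterlim (\<lambda>n. dist_sq n ((1 - b) * tau n c)) at_top sequentially"
    using dist_sq_after_tau_tendsto_0[OF gap c] dist_sq_before_tau_at_top[OF gap[OF c c] c] by auto
qed

lemma mixing_time_eventually_le:
  assumes gap: "\<And>c. 0 < c \<Longrightarrow> filterlim (\<lambda>n. mixing_time n \<epsilon> * cutoff_eigenvalue n c) at_top sequentially"
    and \<epsilon>: "0 < \<epsilon>" "0 < \<delta>" and c: "0 < c"
  obtains M where "\<forall>\<^sub>F n in sequentially. mixing_time n \<delta> \<le> mixing_time n \<epsilon> + 2 * M / cutoff_eigenvalue n c"
proof -
  define c' where "c' = min c (\<delta>\<^sup>2 / 3)"
  have c': "0 < c'" "c' \<le> c" "c' \<le> \<delta>\<^sup>2 / 3"
    using c \<epsilon> by (auto simp: c'_def)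
  obtain K where K: "c * exp (- 2 * K) \<le> \<delta>\<^sup>2 / 3"
    using exists_exp_decay_le[of c "\<delta>\<^sup>2 / 3"] c \<epsilon> by auto
  obtain M where M: "1 \<le> M" "\<epsilon>\<^sup>2 * exp (- 2 * M) \<le> \<delta>\<^sup>2 / 3"
    using exists_exp_decay_le[of "\<epsilon>\<^sup>2" "\<delta>\<^sup>2 / 3"] \<epsilon> by auto
  have "\<forall>\<^sub>F n in sequentially. K \<le> mixing_time n \<epsilon> * cutoff_eigenvalue n c'"
    using gap[OF c'(1)] by (simp add: filterlim_at_top)
  then have "\<forall>\<^sub>F n in sequentially. mixing_time n \<delta> \<le> mixing_time n \<epsilon> + 2 * M / cutoff_eigenvalue n c"
    using eventually_mass_gt[of c]
  proof eventually_elim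
    case (elim n)
    interpret P: spectral_profile "N n" "a n" "lam n" by (rule profile)
    have "c * exp (- 2 * cutoff_eigenvalue n c' * mixing_time n \<epsilon>) \<le> c * exp (- 2 * K)"
      using elim(1) c by (intro mult_left_mono) (auto simp: mult_ac)
    then have "c' + c * exp (- 2 * cutoff_eigenvalue n c' * mixing_time n \<epsilon>) + \<epsilon>\<^sup>2 * exp (- 2 * M) \<le> \<delta>\<^sup>2"
      using c'(3) K M(2) by linarith
    then show ?case
      using c' elim(2) \<epsilon> M(1) by (intro P.mixing_time_le_mixing_time_plus) auto
  qed
  then show ?thesis by (rule that)
qed

lemma mixing_time_window:
  assumes gap: "\<And>\<epsilon> c. 0 < \<epsilon> \<Longrightarrow> 0 < c \<Longrightarrow>
                  filterlim (\<lambda>n. mixing_time n \<epsilon> * cutoff_eigenvalue n c) at_top sequentially"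
    and \<epsilon>: "0 < \<epsilon>" "0 < \<delta>" and c: "0 < c"
  shows "(\<lambda>n. \<bar>mixing_time n \<epsilon> - mixing_time n \<delta>\<bar>) \<in> O(\<lambda>n. 1 / cutoff_eigenvalue n c)"
proof -
  obtain M\<^sub>1 where M\<^sub>1: "\<forall>\<^sub>F n in sequentially. mixing_time n \<delta> \<le> mixing_time n \<epsilon> + 2 * M\<^sub>1 / cutoff_eigenvalue n c"
    using mixing_time_eventually_le[OF gap \<epsilon> c] \<epsilon> by blast
  obtain M\<^sub>2 where M\<^sub>2: "\<forall>\<^sub>F n in sequentially. mixing_time n \<epsilon> \<le> mixing_time n \<delta> + 2 * M\<^sub>2 / cutoff_eigenvalue n c"
    using mixing_time_eventually_le[OF gap \<epsilon>(2,1) c] \<epsilon> by blast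
  show ?thesis
  proof (rule bigoI)
    show "\<forall>\<^sub>F n in sequentially. norm \<bar>mixing_time n \<epsilon> - mixing_time n \<delta>\<bar>
                                  \<le> 2 * max M\<^sub>1 M\<^sub>2 * norm (1 / cutoff_eigenvalue n c)"
      using M\<^sub>1 M\<^sub>2 eventually_mass_gt[of c]
    proof eventually_elim
      case (elim n)
      have l: "0 < cutoff_eigenvalue n c"
        using spectral_profile.cutoff_eigenvalue_pos[OF profile] c elim by simp
      then have "2 * M\<^sub>1 / cutoff_eigenvalue n c \<le> 2 * max M\<^sub>1 M\<^sub>2 * (1 / cutoff_eigenvalue n c)"
        and "2 * M\<^sub>2 / cutoff_eigenvalue n c \<le> 2 * max M\<^sub>1 M\<^sub>2 * (1 / cutoff_eigenvalue n c)"
        by (simp_all add: divide_right_mono)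
      then show ?case using elim l by simp
    qed
  qed
qed

lemma mixing_time_near_tau:
  assumes gap: "\<And>c' c. 0 < c' \<Longrightarrow> 0 < c \<Longrightarrow>
                  filterlim (\<lambda>n. tau n c' * cutoff_eigenvalue n c) at_top sequentially"
    and \<epsilon>: "0 < \<epsilon>" and c: "0 < c"
  shows "(\<lambda>n. \<bar>mixing_time n \<epsilon> - tau n c\<bar>) \<in> O(\<lambda>n. sqrt (tau n c / cutoff_eigenvalue n c))"
proof -
  define c' where "c' = min c (\<epsilon>\<^sup>2 / 3)"
  have c': "0 < c'" "c' \<le> c" "c' \<le> \<epsilon>\<^sup>2 / 3"
    using c \<epsilon> by (auto simp: c'_def)
  obtain K where K: "c * exp (- 2 * K) \<le> \<epsilon>\<^sup>2 / 3"
    using exists_exp_decay_le[of c "\<epsilon>\<^sup>2 / 3"] c \<epsilon> by auto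
  obtain M where M: "1 \<le> M" "3 * exp 1 * exp (- 2 * M) \<le> \<epsilon>\<^sup>2 / 3"
    using exists_exp_decay_le[of "3 * exp 1" "\<epsilon>\<^sup>2 / 3"] \<epsilon> by auto
  have "\<forall>\<^sub>F n in sequentially. K \<le> tau n c * cutoff_eigenvalue n c'"
    using gap[OF c c'(1)] by (simp add: filterlim_at_top)
  moreover have "\<forall>\<^sub>F n in sequentially. 1 \<le> tau n c * cutoff_eigenvalue n c"
    using gap[OF c c] by (simp add: filterlim_at_top)
  ultimately have "\<forall>\<^sub>F n in sequentially. norm \<bar>mixing_time n \<epsilon> - tau n c\<bar>
                      \<le> max (\<epsilon>\<^sup>2) M * norm (sqrt (tau n c / cutoff_eigenvalue n c))"
    using eventually_mass_gt[of c]
  proof eventually_elim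
    case (elim n)
    interpret P: spectral_profile "N n" "a n" "lam n" by (rule profile)
    have "0 < tau n c" "0 < cutoff_eigenvalue n c"
      using P.tau_pos P.cutoff_eigenvalue_pos c elim by auto
    then show ?case
      using P.mixing_time_near_tau_le[OF _ c'(2) elim(3) c'(3) \<epsilon> elim(1) K M elim(2)] c' by simp
  qed
  then show ?thesis by (rule bigoI)
qed

lemma dist_cutoff_iff:
  shows "(\<exists>t. dist_cutoff t) \<longleftrightarrow>
           (\<forall>\<epsilon>>0. \<forall>c>0. filterlim (\<lambda>n. mixing_time n \<epsilon> * cutoff_eigenvalue n c) at_top sequentially)"
    and "(\<exists>t. dist_cutoff t) \<longleftrightarrow>
           (\<exists>\<epsilon>>0. \<forall>c>0. filterlim (\<lambda>n. mixing_time n \<epsilon> * cutoff_eigenvalue n c) at_top sequentially)"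
    and "(\<exists>t. dist_cutoff t) \<longleftrightarrow>
           (\<forall>c>0. filterlim (\<lambda>n. tau n c * cutoff_eigenvalue n c) at_top sequentially)"
    and "(\<exists>t. dist_cutoff t) \<longleftrightarrow>
           (\<forall>c'>0. \<forall>c>0. filterlim (\<lambda>n. tau n c' * cutoff_eigenvalue n c) at_top sequentially)"
    and "(\<exists>t. dist_cutoff t) \<longleftrightarrow>
           (\<exists>c'>0. \<forall>c>0. filterlim (\<lambda>n. tau n c' * cutoff_eigenvalue n c) at_top sequentially)"
proof -
  define mixing_gap where "mixing_gap \<epsilon> \<longleftrightarrow>
    (\<forall>c>0. filterlim (\<lambda>n. mixing_time n \<epsilon> * cutoff_eigenvalue n c) at_top sequentially)" for \<epsilon>
  define tau_gap where "tau_gap c' \<longleftrightarrow>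
    (\<forall>c>0. filterlim (\<lambda>n. tau n c' * cutoff_eigenvalue n c) at_top sequentially)" for c'
  define diagonal_gap where "diagonal_gap \<longleftrightarrow>
    (\<forall>c>0. filterlim (\<lambda>n. tau n c * cutoff_eigenvalue n c) at_top sequentially)"
  define cutoff where "cutoff \<longleftrightarrow> (\<exists>t. dist_cutoff t)"
  have cutoff_mixing: "cutoff \<Longrightarrow> 0 < \<epsilon> \<Longrightarrow> mixing_gap \<epsilon>" for \<epsilon>
    unfolding cutoff_def mixing_gap_def using mixing_time_gap_of_cutoff by blast
  have mixing_diagonal: "0 < \<epsilon> \<Longrightarrow> mixing_gap \<epsilon> \<Longrightarrow> diagonal_gap" for \<epsilon>
    unfolding mixing_gap_def diagonal_gap_def using diagonal_gap_of_mixing_time_gap by blast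
  have diagonal_tau: "diagonal_gap \<Longrightarrow> 0 < c' \<Longrightarrow> tau_gap c'" for c'
    unfolding tau_gap_def diagonal_gap_def using tau_gap_of_diagonal_gap by blast
  have tau_diagonal: "0 < c' \<Longrightarrow> tau_gap c' \<Longrightarrow> diagonal_gap" for c'
    unfolding tau_gap_def diagonal_gap_def using diagonal_gap_of_tau_gap by blast
  have tau_cutoff: "(\<And>c'. 0 < c' \<Longrightarrow> tau_gap c') \<Longrightarrow> cutoff"
    unfolding tau_gap_def cutoff_def using dist_cutoff_at_tau[of 1] by auto
  have cutoff_diagonal: "cutoff \<longleftrightarrow> diagonal_gap"
    using cutoff_mixing[of 1] mixing_diagonal[of 1] diagonal_tau tau_cutoff by auto
  show "cutoff \<longleftrightarrow> (\<forall>\<epsilon>>0. mixing_gap \<epsilon>)"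
    using cutoff_diagonal cutoff_mixing mixing_diagonal[of 1] by auto
  show "cutoff \<longleftrightarrow> (\<exists>\<epsilon>>0. mixing_gap \<epsilon>)"
    using cutoff_diagonal cutoff_mixing[of 1] mixing_diagonal by (auto intro!: exI[of _ 1])
  show "cutoff \<longleftrightarrow> diagonal_gap"
    by (fact cutoff_diagonal)
  show "cutoff \<longleftrightarrow> (\<forall>c'>0. tau_gap c')"
    using cutoff_diagonal diagonal_tau tau_diagonal[of 1] by auto
  show "cutoff \<longleftrightarrow> (\<exists>c'>0. tau_gap c')"
    using cutoff_diagonal diagonal_tau[of 1] tau_diagonal by (auto intro!: exI[of _ 1])
qed

lemma dist_cutoff_consequences:
  "(\<exists>t. dist_cutoff t) \<longrightarrow>
     (\<forall>c>0. dist_cutoff (\<lambda>n. tau n c)) \<and>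
     (\<forall>\<epsilon>>0. \<forall>\<delta>>0. \<forall>c>0.
        (\<lambda>n. \<bar>mixing_time n \<epsilon> - mixing_time n \<delta>\<bar>) \<in> O(\<lambda>n. 1 / cutoff_eigenvalue n c)) \<and>
     (\<forall>\<epsilon>>0. \<forall>c>0.
        (\<lambda>n. \<bar>mixing_time n \<epsilon> - tau n c\<bar>) \<in> O(\<lambda>n. sqrt (tau n c / cutoff_eigenvalue n c)))"
  (is "_ \<longrightarrow> ?consequences")
proof
  assume "\<exists>t. dist_cutoff t"
  then have mixing_gap: "\<And>\<epsilon> c. 0 < \<epsilon> \<Longrightarrow> 0 < c \<Longrightarrow>
                 filterlim (\<lambda>n. mixing_time n \<epsilon> * cutoff_eigenvalue n c) at_top sequentially"
    and tau_gap: "\<And>c' c. 0 < c' \<Longrightarrow> 0 < c \<Longrightarrow>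
                 filterlim (\<lambda>n. tau n c' * cutoff_eigenvalue n c) at_top sequentially"
    using dist_cutoff_iff(1,4) by blast+
  show ?consequences
    using dist_cutoff_at_tau[OF tau_gap] mixing_time_window[OF mixing_gap]
      mixing_time_near_tau[OF tau_gap] by blast
qed

end

definition spectral_weights :: "'a set \<Rightarrow> ('a \<Rightarrow> real) \<Rightarrow> (nat \<Rightarrow> 'a \<Rightarrow> real) \<Rightarrow> nat \<Rightarrow> real" where
  "spectral_weights S mu phi i = \<bar>mu_of S mu (phi i)\<bar>\<^sup>2"

context spectral_chain
begin

lemma spectral_profile_weights: "spectral_profile (card S) (spectral_weights S mu phi) lam"
proof
  fix i j :: nat
  show "0 \<le> spectral_weights S mu phi i" by (simp add: spectral_weights_def)
  show "1 \<le> i \<Longrightarrow> i \<le> j \<Longrightarrow> j < card S \<Longrightarrow> lam i \<le> lam j"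
    using spectral by (simp add: spectral_data_def)
  assume "1 \<le> i" "i < card S"
  then have "0 < lam 1" "lam 1 \<le> lam i"
    using spectral unfolding spectral_data_def by auto
  then show "0 < lam i" by linarith
qed

interpretation weights: spectral_profile "card S" "spectral_weights S mu phi" lam
  by (rule spectral_profile_weights)

lemma jfun_eq_cutoff_index: "jfun S mu phi c = weights.cutoff_index c"
  unfolding jfun_def weights.cutoff_index_def weights.mass_def psum_def spectral_weights_def ..

lemma taufun_eq_tau: "taufun S mu lam phi c = weights.tau c"
  unfolding taufun_def weights.tau_def weights.tau_at_def[abs_def] jfun_eq_cutoff_index
    weights.mass_def psum_def spectral_weights_def ..

lemma d2_eq_dist_sq:
  "d2 S L pd mu t = sqrt (weights.dist_sq t)"
  unfolding d2_spectral weights.partial_dist_sq_def spectral_weights_def ..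

lemma T2_eq_mixing_time:
  "T2 S L pd mu \<epsilon> = weights.mixing_time \<epsilon>"
  unfolding T2_def weights.mixing_time_def d2_eq_dist_sq ..

lemma chi2_eq_total_mass: "chi2 S pd mu = 1 + weights.mass (card S - 1)"
proof -
  have "{1..<card S} = {1..card S - 1}" by auto
  then show ?thesis
    unfolding chi2_spectral weights.mass_def spectral_weights_def by simp
qed

end

lemma sqrt_tendsto_0_iff:
  fixes g :: "nat \<Rightarrow> real"
  assumes "\<And>n. 0 \<le> g n"
  shows "(\<lambda>n. sqrt (g n)) \<longlonglongrightarrow> 0 \<longleftrightarrow> g \<longlonglongrightarrow> 0"
proof
  assume "(\<lambda>n. sqrt (g n)) \<longlonglongrightarrow> 0"
  then have "(\<lambda>n. (sqrt (g n))\<^sup>2) \<longlonglongrightarrow> 0\<^sup>2" by (intro tendsto_power)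
  then show "g \<longlonglongrightarrow> 0" using assms by simp
next
  assume "g \<longlonglongrightarrow> 0"
  then show "(\<lambda>n. sqrt (g n)) \<longlonglongrightarrow> 0" using tendsto_real_sqrt by force
qed

lemma sqrt_filterlim_at_top_iff:
  fixes g :: "nat \<Rightarrow> real"
  assumes "\<And>n. 0 \<le> g n"
  shows "filterlim (\<lambda>n. sqrt (g n)) at_top sequentially \<longleftrightarrow> filterlim g at_top sequentially"
proof
  assume "filterlim (\<lambda>n. sqrt (g n)) at_top sequentially"
  then have "filterlim (\<lambda>n. (sqrt (g n)) ^ 2) at_top sequentially" by (intro filterlim_pow_at_top) auto
  then show "filterlim g at_top sequentially" using assms by simp
next
  assume "filterlim g at_top sequentially"
  then show "filterlim (\<lambda>n. sqrt (g n)) at_top sequentially" by (rule filterlim_compose[OF sqrt_at_top])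
qed

theorem theorem3p2:
  fixes S :: "nat \<Rightarrow> 'a set" and L :: "nat \<Rightarrow> 'a \<Rightarrow> 'a \<Rightarrow> real"
    and pd mu :: "nat \<Rightarrow> 'a \<Rightarrow> real"
    and lam :: "nat \<Rightarrow> nat \<Rightarrow> real" and phi :: "nat \<Rightarrow> nat \<Rightarrow> 'a \<Rightarrow> real"
  assumes fin: "\<And>n. finite (S n) \<and> S n \<noteq> {}"
    and gen: "\<And>n. is_generator (S n) (L n)"
    and irr: "\<And>n. irreducible_chain (S n) (L n)"
    and stat: "\<And>n. stationary_positive (S n) (L n) (pd n)"
    and rev: "\<And>n. reversible_chain (S n) (L n) (pd n)"
    and init: "\<And>n. prob_distr (S n) (mu n)"
    and spec: "\<And>n. spectral_data (S n) (L n) (pd n) (lam n) (phi n)"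
    and chi: "filterlim (\<lambda>n. chi2 (S n) (pd n) (mu n)) at_top sequentially"
  shows
   "(has_L2_cutoff S L pd mu \<longleftrightarrow>
       (\<forall>\<epsilon>>0. \<forall>c>0. filterlim (\<lambda>n. T2 (S n) (L n) (pd n) (mu n) \<epsilon>
            * lam n (jfun (S n) (mu n) (phi n) c)) at_top sequentially)) \<and>
    (has_L2_cutoff S L pd mu \<longleftrightarrow>
       (\<exists>\<epsilon>>0. \<forall>c>0. filterlim (\<lambda>n. T2 (S n) (L n) (pd n) (mu n) \<epsilon>
            * lam n (jfun (S n) (mu n) (phi n) c)) at_top sequentially)) \<and>
    (has_L2_cutoff S L pd mu \<longleftrightarrow>
       (\<forall>c>0. filterlim (\<lambda>n. taufun (S n) (mu n) (lam n) (phi n) c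
            * lam n (jfun (S n) (mu n) (phi n) c)) at_top sequentially)) \<and>
    (has_L2_cutoff S L pd mu \<longleftrightarrow>
       (\<forall>c'>0. \<forall>c>0. filterlim (\<lambda>n. taufun (S n) (mu n) (lam n) (phi n) c'
            * lam n (jfun (S n) (mu n) (phi n) c)) at_top sequentially)) \<and>
    (has_L2_cutoff S L pd mu \<longleftrightarrow>
       (\<exists>c'>0. \<forall>c>0. filterlim (\<lambda>n. taufun (S n) (mu n) (lam n) (phi n) c'
            * lam n (jfun (S n) (mu n) (phi n) c)) at_top sequentially)) \<and>
    (has_L2_cutoff S L pd mu \<longrightarrow>
       (\<forall>c>0. L2_cutoff_time S L pd mu (\<lambda>n. taufun (S n) (mu n) (lam n) (phi n) c)) \<and>
       (\<forall>\<epsilon>>0. \<forall>\<delta>>0. \<forall>c>0.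
          (\<lambda>n. \<bar>T2 (S n) (L n) (pd n) (mu n) \<epsilon> - T2 (S n) (L n) (pd n) (mu n) \<delta>\<bar>)
            \<in> O(\<lambda>n. 1 / lam n (jfun (S n) (mu n) (phi n) c))) \<and>
       (\<forall>\<epsilon>>0. \<forall>c>0.
          (\<lambda>n. \<bar>T2 (S n) (L n) (pd n) (mu n) \<epsilon> - taufun (S n) (mu n) (lam n) (phi n) c\<bar>)
            \<in> O(\<lambda>n. sqrt (taufun (S n) (mu n) (lam n) (phi n) c
                           / lam n (jfun (S n) (mu n) (phi n) c)))))"
proof -
  let ?w = "\<lambda>n. spectral_weights (S n) (mu n) (phi n)"
  have chain: "spectral_chain (S n) (L n) (pd n) (mu n) (lam n) (phi n)" for n
    using fin stat rev init spec by unfold_locales auto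
  have "spectral_family (\<lambda>n. card (S n)) ?w lam"
  proof (rule spectral_family.intro)
    show "spectral_profile (card (S n)) (?w n) (lam n)" for n
      by (rule spectral_chain.spectral_profile_weights[OF chain])
    have "filterlim (\<lambda>n. -1 + chi2 (S n) (pd n) (mu n)) at_top sequentially"
      by (rule filterlim_tendsto_add_at_top[OF tendsto_const chi])
    then show "filterlim (\<lambda>n. spectral_profile.mass (?w n) (card (S n) - 1)) at_top sequentially"
      using spectral_chain.chi2_eq_total_mass[OF chain] by simp
  qed
  then interpret F: spectral_family "\<lambda>n. card (S n)" ?w lam .
  have cutoff: "L2_cutoff_time S L pd mu t \<longleftrightarrow> F.dist_cutoff t" for t
    unfolding L2_cutoff_time_def F.dist_cutoff_def spectral_chain.d2_eq_dist_sq[OF chain]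
    by (simp add: sqrt_tendsto_0_iff sqrt_filterlim_at_top_iff spectral_profile.partial_dist_sq_nonneg[OF F.profile])
  show ?thesis
    unfolding has_L2_cutoff_def cutoff spectral_chain.T2_eq_mixing_time[OF chain]
      spectral_chain.jfun_eq_cutoff_index[OF chain] spectral_chain.taufun_eq_tau[OF chain]
    using F.dist_cutoff_iff F.dist_cutoff_consequences by (intro conjI) assumption+
qed

end
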